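(* Let $\Gamma$ be a connected simple graph of connectivity $1$, and let $\Lambda_0$ be an arbitrary lobe of $\Gamma$. Let $\{P_i : i\in\mathbb{I}\}$ be the set of orbits of $\mathrm{Aut}(\Gamma)$ acting on $V\Gamma$. Let $S\le \mathrm{Aut}(\Gamma)$ be the setwise stabilizer of $\Lambda_0$, and let $\{Q_j : j\in\mathbb{J}\}$ be the set of orbits of $S$ on $V\Gamma$ that are contained in $V\Lambda_0$. For each $j\in\mathbb{J}$ let $P_{i_j}$ denote the orbit of $\mathrm{Aut}(\Gamma)$ containing $Q_j$. Then $\Gamma$ is lobe-transitive (i.e. $\mathrm{Aut}(\Gamma)$ acts transitively on the set $\mathscr{L}(\Gamma)$ of lobes) if and only if the following hold: (1) there is a family of graph isomorphisms $\sigma_\Lambda:\Lambda_0\to\Lambda$, one for each lobe $\Lambda\in\mathscr{L}(\Gamma)$, such that (2) for each $j\in\mathbb{J}$, the function $\tau_j:V\Gamma\to\mathbb{N}\cup\{0,\aleph_0\}$ defined by $$\tau_j(v)=\bigl|\{\Lambda\in\mathscr{L}(\Gamma): v\in\sigma_\Lambda(Q_j)\}\bigr|$$ satisfies (a) $\tau_j$ is constant on $P_i$ for every $i\in\mathbb{I}$, and (b) for all $v\in V\Gamma$, $\tau_j(v)>0$ if and only if $v\in P_{i_j}$ (i.e. $v$ lies in the $\mathrm{Aut}(\Gamma)$-orbit that contains the sets $\sigma_\Lambda(Q_j)$).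
   Context: All graphs are simple, connected, and finite or countably infinite (so vertex valences are finite or countably infinite). For edges $e_1,e_2$ of $\Gamma$ write $e_1\cong e_2$ if $e_1=e_2$ or $e_1,e_2$ lie on a common cycle; this is an equivalence relation on $E\Gamma$. A lobe of $\Gamma$ is the subgraph induced by an equivalence class (equivalently, a cut-edge with its two end-vertices, or a maximal biconnected subgraph). $\mathscr{L}(\Gamma)$ is the set of lobes. A vertex is a cut vertex if it lies in at least two lobes; a connected graph other than $K_2$ has connectivity $1$ iff it has a cut vertex. $\mathbb{N}$ denotes the positive integers. *)

theory Defs
  imports Main "HOL-Library.Extended_Nat" "HOL-Library.Countable_Set"
begin

definition simple_graph :: "'a set \<Rightarrow> ('a \<Rightarrow> 'a \<Rightarrow> bool) \<Rightarrow> bool" where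
  "simple_graph V E \<longleftrightarrow> countable V \<and> V \<noteq> {} \<and>
     (\<forall>u v. E u v \<longrightarrow> u \<in> V \<and> v \<in> V \<and> u \<noteq> v \<and> E v u)"

definition connected_graph :: "'a set \<Rightarrow> ('a \<Rightarrow> 'a \<Rightarrow> bool) \<Rightarrow> bool" where
  "connected_graph V E \<longleftrightarrow> (\<forall>u\<in>V. \<forall>v\<in>V. E\<^sup>*\<^sup>* u v)"

definition edges :: "'a set \<Rightarrow> ('a \<Rightarrow> 'a \<Rightarrow> bool) \<Rightarrow> 'a set set" where
  "edges V E = {{u, v} | u v. u \<in> V \<and> v \<in> V \<and> E u v}"

definition is_cycle :: "'a set \<Rightarrow> ('a \<Rightarrow> 'a \<Rightarrow> bool) \<Rightarrow> 'a list \<Rightarrow> bool" where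
  "is_cycle V E cs \<longleftrightarrow> length cs \<ge> 3 \<and> distinct cs \<and> set cs \<subseteq> V \<and>
     (\<forall>i < length cs. E (cs ! i) (cs ! ((i + 1) mod length cs)))"

definition cycle_edges :: "'a list \<Rightarrow> 'a set set" where
  "cycle_edges cs = {{cs ! i, cs ! ((i + 1) mod length cs)} | i. i < length cs}"

definition edge_rel :: "'a set \<Rightarrow> ('a \<Rightarrow> 'a \<Rightarrow> bool) \<Rightarrow> 'a set \<Rightarrow> 'a set \<Rightarrow> bool" where
  "edge_rel V E e1 e2 \<longleftrightarrow> e1 = e2 \<or>
     (\<exists>cs. is_cycle V E cs \<and> e1 \<in> cycle_edges cs \<and> e2 \<in> cycle_edges cs)"

text \<open>Lobes, represented by their edge sets (equivalence classes of \<cong>);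
  the vertex set of a lobe L is \<Union>L.\<close>
definition lobes :: "'a set \<Rightarrow> ('a \<Rightarrow> 'a \<Rightarrow> bool) \<Rightarrow> 'a set set set" where
  "lobes V E = {{e' \<in> edges V E. edge_rel V E e e'} | e. e \<in> edges V E}"

definition cut_vertex :: "'a set \<Rightarrow> ('a \<Rightarrow> 'a \<Rightarrow> bool) \<Rightarrow> 'a \<Rightarrow> bool" where
  "cut_vertex V E v \<longleftrightarrow> v \<in> V \<and> (\<exists>L1 \<in> lobes V E. \<exists>L2 \<in> lobes V E. L1 \<noteq> L2 \<and> v \<in> \<Union>L1 \<and> v \<in> \<Union>L2)"

definition connectivity_one :: "'a set \<Rightarrow> ('a \<Rightarrow> 'a \<Rightarrow> bool) \<Rightarrow> bool" where
  "connectivity_one V E \<longleftrightarrow> connected_graph V E \<and> (\<exists>v. cut_vertex V E v)"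

definition automorphisms :: "'a set \<Rightarrow> ('a \<Rightarrow> 'a \<Rightarrow> bool) \<Rightarrow> ('a \<Rightarrow> 'a) set" where
  "automorphisms V E = {f. bij_betw f V V \<and> (\<forall>u\<in>V. \<forall>v\<in>V. E u v \<longleftrightarrow> E (f u) (f v))}"

definition edge_image :: "('a \<Rightarrow> 'a) \<Rightarrow> 'a set set \<Rightarrow> 'a set set" where
  "edge_image f L = (\<lambda>e. f ` e) ` L"

definition lobe_transitive :: "'a set \<Rightarrow> ('a \<Rightarrow> 'a \<Rightarrow> bool) \<Rightarrow> bool" where
  "lobe_transitive V E \<longleftrightarrow>
     (\<forall>L1 \<in> lobes V E. \<forall>L2 \<in> lobes V E. \<exists>f \<in> automorphisms V E. edge_image f L1 = L2)"

definition orbit_of :: "('a \<Rightarrow> 'a) set \<Rightarrow> 'a \<Rightarrow> 'a set" where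
  "orbit_of G v = {f v | f. f \<in> G}"

definition lobe_stabilizer :: "'a set \<Rightarrow> ('a \<Rightarrow> 'a \<Rightarrow> bool) \<Rightarrow> 'a set set \<Rightarrow> ('a \<Rightarrow> 'a) set" where
  "lobe_stabilizer V E L0 = {f \<in> automorphisms V E. edge_image f L0 = L0}"

definition lobe_iso :: "'a set set \<Rightarrow> 'a set set \<Rightarrow> ('a \<Rightarrow> 'a) \<Rightarrow> bool" where
  "lobe_iso L0 L g \<longleftrightarrow> bij_betw g (\<Union>L0) (\<Union>L) \<and>
     (\<forall>x\<in>\<Union>L0. \<forall>y\<in>\<Union>L0. {x, y} \<in> L0 \<longleftrightarrow> {g x, g y} \<in> L)"

text \<open>Cardinality in \<nat> \<union> {0, aleph_0} (sets involved are countable).\<close>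
definition ecount :: "'b set \<Rightarrow> enat" where
  "ecount A = (if finite A then enat (card A) else \<infinity>)"

end

theory Submission
  imports Defs
begin

text \<open>
  Lobes are the blocks of the graph: no cycle passes through two of them, so seen from any root lobe
  every other lobe hangs from a unique vertex and the lobes form a tree.

  If the graph is lobe-transitive, let \<open>\<sigma> L\<close> be automorphisms mapping \<open>L0\<close> to \<open>L\<close>. Two such choices
  differ by an element of the stabiliser of \<open>L0\<close>, so \<open>\<sigma> L ` Q\<close> depends only on \<open>L\<close> for every
  stabiliser orbit \<open>Q\<close>. Hence an automorphism \<open>g\<close> maps the lobes counted by \<open>\<tau>(v)\<close> bijectively onto
  those counted by \<open>\<tau>(g v)\<close>, which is (a), and \<open>g ` Q = \<sigma> (g L0) ` Q\<close> gives (b).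

  Conversely, (b) alone says that every \<open>\<sigma> L\<close> maps each vertex into its orbit
  under the automorphism group. Such an orbit-preserving isomorphism \<open>L0 \<rightarrow> L\<close> extends to an
  automorphism, built lobe by lobe away from \<open>L0\<close>: if a lobe through \<open>c\<close> is already mapped, with
  \<open>c \<mapsto> c'\<close>, an automorphism \<open>g\<close> with \<open>g c = c'\<close> matches the remaining lobes at \<open>c\<close> with those
  at \<open>c'\<close>, up to rerouting the one lobe that \<open>g\<close> sends onto the image of the mapped lobe.
\<close>

section \<open>Walks\<close>

definition walk :: "('a \<Rightarrow> 'a \<Rightarrow> bool) \<Rightarrow> 'a list \<Rightarrow> bool" where
  "walk R xs \<longleftrightarrow> xs \<noteq> [] \<and> successively R xs"

lemma walk_simps [simp]:
  "\<not> walk R []" "walk R [x]" "walk R (x # y # zs) \<longleftrightarrow> R x y \<and> walk R (y # zs)"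
  by (auto simp: walk_def)

fun walk_edges :: "'a list \<Rightarrow> 'a set set" where
  "walk_edges (x # y # zs) = insert {x, y} (walk_edges (y # zs))"
| "walk_edges _ = {}"

lemma walk_append_iff: "walk R (xs @ y # ys) \<longleftrightarrow> walk R (xs @ [y]) \<and> walk R (y # ys)"
  by (auto simp: walk_def successively_append_iff)

lemma walk_append: "walk R xs \<Longrightarrow> walk R ys \<Longrightarrow> R (last xs) (hd ys) \<Longrightarrow> walk R (xs @ ys)"
  by (auto simp: walk_def successively_append_iff)

lemma walk_prefix: "walk R (xs @ ys) \<Longrightarrow> xs \<noteq> [] \<Longrightarrow> walk R xs"
  by (auto simp: walk_def successively_append_iff)

lemma walk_suffix: "walk R (xs @ ys) \<Longrightarrow> ys \<noteq> [] \<Longrightarrow> walk R ys"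
  by (auto simp: walk_def successively_append_iff)

lemma walk_last_step: "walk R (xs @ [y]) \<Longrightarrow> xs \<noteq> [] \<Longrightarrow> R (last xs) y"
  by (auto simp: walk_def successively_append_iff)

lemma walk_rev: "(\<And>u v. R u v \<Longrightarrow> R v u) \<Longrightarrow> walk R xs \<Longrightarrow> walk R (rev xs)"
  by (auto simp: walk_def elim: successively_mono)

lemma walk_map: "walk R xs \<Longrightarrow> (\<And>u v. R u v \<Longrightarrow> R' (f u) (f v)) \<Longrightarrow> walk R' (map f xs)"
  by (auto simp: walk_def successively_map elim: successively_mono)

lemma walk_mono:
  "walk R xs \<Longrightarrow> (\<And>u v. R u v \<Longrightarrow> {u, v} \<in> walk_edges xs \<Longrightarrow> R' u v) \<Longrightarrow> walk R' xs"
  by (induction xs rule: induct_list012) auto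

lemma walk_edges_append: "walk_edges (xs @ y # ys) = walk_edges (xs @ [y]) \<union> walk_edges (y # ys)"
  by (induction xs rule: induct_list012) auto

lemma walk_edges_append_nonempty:
  "xs \<noteq> [] \<Longrightarrow> ys \<noteq> [] \<Longrightarrow> walk_edges (xs @ ys) = walk_edges xs \<union> walk_edges ys \<union> {{last xs, hd ys}}"
proof (induction xs rule: induct_list012)
  case (2 x) then show ?case by (cases ys) auto
qed auto

lemma walk_edges_suffix: "walk_edges ys \<subseteq> walk_edges (xs @ ys)"
proof (induction xs)
  case (Cons x xs) then show ?case by (cases "xs @ ys") auto
qed simp

lemma walk_edges_rev: "walk_edges (rev xs) = walk_edges xs"
proof (induction xs rule: induct_list012)
  case (3 x y zs)
  then show ?case
    using walk_edges_append_nonempty[of "rev (y # zs)" "[x]"] by auto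
qed auto

lemma walk_edges_map: "walk_edges (map f xs) = (\<lambda>e. f ` e) ` walk_edges xs"
  by (induction xs rule: induct_list012) auto

lemma walk_edges_nth: "walk_edges xs = {{xs ! i, xs ! Suc i} | i. Suc i < length xs}"
proof -
  have "walk_edges xs = set (map2 (\<lambda>x y. {x, y}) xs (tl xs))"
    by (induction xs rule: induct_list012) auto
  then show ?thesis by (force simp: set_zip nth_tl)
qed

lemma walk_iff_nth: "walk R xs \<longleftrightarrow> xs \<noteq> [] \<and> (\<forall>i. Suc i < length xs \<longrightarrow> R (xs ! i) (xs ! Suc i))"
proof (induction xs rule: induct_list012)
  case (3 x y zs)
  have "(\<forall>i. Suc i < length (x # y # zs) \<longrightarrow> R ((x # y # zs) ! i) ((x # y # zs) ! Suc i)) \<longleftrightarrow>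
        R x y \<and> (\<forall>i. Suc i < length (y # zs) \<longrightarrow> R ((y # zs) ! i) ((y # zs) ! Suc i))"
    (is "(\<forall>i. ?P i) \<longleftrightarrow> _")
  proof
    assume "\<forall>i. ?P i"
    then show "R x y \<and> (\<forall>i. Suc i < length (y # zs) \<longrightarrow> R ((y # zs) ! i) ((y # zs) ! Suc i))"
      by (auto dest: spec[of _ 0] spec[of _ "Suc _"])
  qed (auto simp: less_Suc_eq_0_disj)
  then show ?case using 3 by simp
qed auto

lemma walk_edge_obtain:
  assumes "walk R xs" "e \<in> walk_edges xs"
  obtains u v where "e = {u, v}" "R u v" "u \<in> set xs" "v \<in> set xs"
  using assms by (induction xs rule: induct_list012) auto

lemma walk_rtranclp: "walk R xs \<Longrightarrow> R\<^sup>*\<^sup>* (hd xs) (last xs)"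
  by (induction xs rule: induct_list012) (auto intro: converse_rtranclp_into_rtranclp)

lemma walk_rtranclp_member: "walk R xs \<Longrightarrow> z \<in> set xs \<Longrightarrow> R\<^sup>*\<^sup>* (hd xs) z"
proof -
  assume "walk R xs" "z \<in> set xs"
  then obtain as bs where xs: "xs = as @ z # bs" by (meson split_list)
  then have "walk R (as @ [z])" using \<open>walk R xs\<close> walk_append_iff by metis
  then show ?thesis using walk_rtranclp[of R "as @ [z]"] xs by (cases as) auto
qed

lemma rtranclp_walk:
  assumes "R\<^sup>*\<^sup>* x y"
  obtains xs where "walk R xs" "hd xs = x" "last xs = y"
proof -
  from assms have "\<exists>xs. walk R xs \<and> hd xs = x \<and> last xs = y"
  proof (induction rule: rtranclp_induct)
    case base then show ?case by (intro exI[of _ "[x]"]) auto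
  next
    case (step y z)
    then obtain xs where "walk R xs" "hd xs = x" "last xs = y" by auto
    then show ?case using walk_append[of R xs "[z]"] step
      by (intro exI[of _ "xs @ [z]"]) (cases xs; auto)
  qed
  then show ?thesis using that by blast
qed

text \<open>Cutting out the closed subwalks between repeated vertices.\<close>

lemma walk_distinct:
  assumes "walk R xs"
  obtains ys where "walk R ys" "distinct ys" "hd ys = hd xs" "last ys = last xs"
    "set ys \<subseteq> set xs" "walk_edges ys \<subseteq> walk_edges xs"
proof -
  have "\<exists>ys. walk R ys \<and> distinct ys \<and> hd ys = hd xs \<and> last ys = last xs \<and>
     set ys \<subseteq> set xs \<and> walk_edges ys \<subseteq> walk_edges xs"
    using assms
  proof (induction "length xs" arbitrary: xs rule: less_induct)
    case less
    show ?case
    proof (cases "distinct xs")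
      case False
      then obtain as y bs cs where xs: "xs = as @ [y] @ bs @ [y] @ cs"
        using not_distinct_decomp by blast
      let ?ys = "as @ y # cs"
      have "walk R ((as @ y # bs) @ y # cs)" using less.prems xs by simp
      then have "walk R (as @ [y])" "walk R (y # cs)"
        using walk_append_iff by (metis append.assoc append_Cons)+
      then have "walk R ?ys" using walk_append_iff by metis
      moreover have "length ?ys < length xs" using xs by simp
      ultimately obtain zs where zs: "walk R zs" "distinct zs" "hd zs = hd ?ys" "last zs = last ?ys"
        "set zs \<subseteq> set ?ys" "walk_edges zs \<subseteq> walk_edges ?ys" using less.hyps by blast
      have "walk_edges xs = walk_edges (as @ [y]) \<union> walk_edges (y # bs @ y # cs)"
        using xs walk_edges_append[of as y "bs @ y # cs"] by simp
      then have "walk_edges ?ys \<subseteq> walk_edges xs"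
        using walk_edges_append[of as y cs] walk_edges_suffix[of "y # cs" "y # bs"] by auto
      moreover have "hd ?ys = hd xs" using xs by (cases as) auto
      moreover have "last ?ys = last xs" using xs by (cases cs) auto
      moreover have "set ?ys \<subseteq> set xs" using xs by auto
      ultimately show ?thesis using zs by (intro exI[of _ zs]) auto
    qed (use less.prems in blast)
  qed
  then show ?thesis using that by blast
qed

lemma rtranclp_first_hit:
  assumes "R\<^sup>*\<^sup>* x y"
  shows "(\<lambda>u v. R u v \<and> {u, v} \<notin> L)\<^sup>*\<^sup>* x y \<or> (\<exists>a\<in>\<Union>L. (\<lambda>u v. R u v \<and> {u, v} \<notin> L)\<^sup>*\<^sup>* x a)"
  using assms
proof (induction rule: rtranclp_induct)
  case (step y z)
  then show ?case
    by (cases "{y, z} \<in> L") (auto intro: rtranclp.rtrancl_into_rtrancl)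
qed simp

section \<open>Cycles and lobes\<close>

lemma nth_closing_append:
  assumes "i < length cs"
  shows "(cs @ [hd cs]) ! i = cs ! i" "(cs @ [hd cs]) ! Suc i = cs ! ((i + 1) mod length cs)"
proof -
  have "cs \<noteq> []" using assms by auto
  then show "(cs @ [hd cs]) ! i = cs ! i" "(cs @ [hd cs]) ! Suc i = cs ! ((i + 1) mod length cs)"
    using assms by (auto simp: nth_append hd_conv_nth mod_Suc)
qed

lemma cycle_edges_closed_walk: "cycle_edges cs = walk_edges (cs @ [hd cs])"
  unfolding cycle_edges_def walk_edges_nth[of "cs @ [hd cs]"]
  by (auto simp: nth_closing_append) (metis Suc_eq_plus1 nth_closing_append)

locale sgraph =
  fixes V :: "'a set" and E :: "'a \<Rightarrow> 'a \<Rightarrow> bool"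
  assumes simple: "simple_graph V E"
begin

lemma adj_imp_vertex: "E u v \<Longrightarrow> u \<in> V" "E u v \<Longrightarrow> v \<in> V"
  using simple unfolding simple_graph_def by blast+

lemma adj_sym: "E u v \<Longrightarrow> E v u"
  using simple unfolding simple_graph_def by blast

lemma adj_irrefl: "E u v \<Longrightarrow> u \<noteq> v"
  using simple unfolding simple_graph_def by blast

lemma walk_in_V: "walk E xs \<Longrightarrow> 2 \<le> length xs \<Longrightarrow> set xs \<subseteq> V"
proof (induction xs rule: induct_list012)
  case (3 x y zs)
  then show ?case using adj_imp_vertex by (cases zs) auto
qed auto

lemma doubleton_in_edges_iff: "{u, v} \<in> edges V E \<longleftrightarrow> E u v"
proof
  assume "{u, v} \<in> edges V E"
  then obtain a b where "{u, v} = {a, b}" "E a b" unfolding edges_def by blast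
  then show "E u v" using adj_sym by (metis doubleton_eq_iff)
qed (auto simp: edges_def intro: adj_imp_vertex)

lemma edgesE:
  assumes "e \<in> edges V E"
  obtains u v where "e = {u, v}" "E u v"
  using assms unfolding edges_def by blast

lemma walk_edges_subset_edges: "walk E xs \<Longrightarrow> walk_edges xs \<subseteq> edges V E"
  by (auto elim: walk_edge_obtain simp: doubleton_in_edges_iff)

lemma is_cycle_iff_walk:
  "is_cycle V E cs \<longleftrightarrow> 3 \<le> length cs \<and> distinct cs \<and> set cs \<subseteq> V \<and> walk E (cs @ [hd cs])"
proof (cases "cs = []")
  case False
  then have "walk E (cs @ [hd cs]) \<longleftrightarrow> (\<forall>i < length cs. E (cs ! i) (cs ! ((i + 1) mod length cs)))"
    unfolding walk_iff_nth by (auto simp: nth_closing_append)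
  then show ?thesis unfolding is_cycle_def by auto
qed (simp add: is_cycle_def)

lemma cycle_edges_subset_edges: "is_cycle V E cs \<Longrightarrow> cycle_edges cs \<subseteq> edges V E"
  using walk_edges_subset_edges cycle_edges_closed_walk by (metis is_cycle_iff_walk)

lemma cycle_rotate:
  assumes "is_cycle V E (as @ bs)"
  shows "is_cycle V E (bs @ as) \<and> cycle_edges (bs @ as) = cycle_edges (as @ bs)"
proof (cases "as = [] \<or> bs = []")
  case False
  then obtain a as' b bs' where ab: "as = a # as'" "bs = b # bs'" by (meson list.exhaust)
  have "walk E ((as @ bs) @ [hd (as @ bs)]) \<longleftrightarrow> walk E (a # as' @ [b]) \<and> walk E (b # bs' @ [a])"
    "walk E ((bs @ as) @ [hd (bs @ as)]) \<longleftrightarrow> walk E (b # bs' @ [a]) \<and> walk E (a # as' @ [b])"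
    using walk_append_iff[of E "a # as'" b "bs' @ [a]"] walk_append_iff[of E "b # bs'" a "as' @ [b]"]
    unfolding ab by simp_all
  moreover have "walk_edges ((as @ bs) @ [hd (as @ bs)]) = walk_edges ((bs @ as) @ [hd (bs @ as)])"
    using walk_edges_append[of "a # as'" b "bs' @ [a]"] walk_edges_append[of "b # bs'" a "as' @ [b]"]
    unfolding ab by auto
  ultimately show ?thesis
    using assms False by (auto simp: is_cycle_iff_walk cycle_edges_closed_walk)
qed (use assms in auto)

lemma cycle_rotate_to_vertex:
  assumes "is_cycle V E cs" "c \<in> set cs"
  obtains zs
  where "is_cycle V E (c # zs)" "cycle_edges (c # zs) = cycle_edges cs" "set (c # zs) = set cs"
proof -
  obtain as bs where "cs = as @ c # bs" using assms(2) by (meson split_list)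
  then show ?thesis using cycle_rotate[of as "c # bs"] assms that[of "bs @ as"] by auto
qed

lemma cycle_rotate_to_edge:
  assumes "is_cycle V E cs" "e \<in> cycle_edges cs"
  obtains a zs
  where "is_cycle V E (a # zs)" "cycle_edges (a # zs) = cycle_edges cs" "e = {last (a # zs), a}"
proof -
  obtain i where i: "i < length cs" "e = {cs ! i, cs ! ((i + 1) mod length cs)}"
    using assms(2) unfolding cycle_edges_def by auto
  define ws where "ws = drop (Suc i) cs @ take (Suc i) cs"
  have ws: "is_cycle V E ws" "cycle_edges ws = cycle_edges cs"
    using cycle_rotate[of "take (Suc i) cs" "drop (Suc i) cs"] assms(1) unfolding ws_def by auto
  have "last ws = cs ! i" using i(1) unfolding ws_def by (simp add: take_Suc_conv_app_nth)
  moreover have "hd ws = cs ! ((i + 1) mod length cs)"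
  proof (cases "Suc i < length cs")
    case False
    then have "Suc i = length cs" using i(1) by simp
    moreover have "cs \<noteq> []" using i(1) by auto
    ultimately show ?thesis unfolding ws_def by (simp add: hd_conv_nth)
  qed (simp add: ws_def hd_append hd_drop_conv_nth)
  moreover have "ws = hd ws # tl ws" using ws(1) by (cases ws) (auto simp: is_cycle_def)
  ultimately show ?thesis
    using that[of "hd ws" "tl ws"] ws i(2) by (metis insert_commute)
qed

lemma cycle_of_two_paths:
  assumes "walk E (u # xs @ [v])" "walk E (v # ys @ [u])" "distinct (u # xs @ v # ys)" "xs @ ys \<noteq> []"
  shows "is_cycle V E (u # xs @ v # ys)"
    "cycle_edges (u # xs @ v # ys) = walk_edges (u # xs @ [v]) \<union> walk_edges (v # ys @ [u])"
proof -
  have closed: "(u # xs @ v # ys) @ [hd (u # xs @ v # ys)] = (u # xs) @ v # (ys @ [u])" by simp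
  have w: "walk E ((u # xs @ v # ys) @ [hd (u # xs @ v # ys)])"
    unfolding closed using walk_append_iff assms(1,2) by (metis append_Cons)
  moreover have "length xs + length ys \<ge> 1" using assms(4) by (cases xs; cases ys) auto
  ultimately show "is_cycle V E (u # xs @ v # ys)"
    using walk_in_V[OF w] assms(3) by (auto simp: is_cycle_iff_walk)
  show "cycle_edges (u # xs @ v # ys) = walk_edges (u # xs @ [v]) \<union> walk_edges (v # ys @ [u])"
    using cycle_edges_closed_walk[of "u # xs @ v # ys"] closed
      walk_edges_append[of "u # xs" v "ys @ [u]"]
    by simp
qed

lemma cycle_arc_through_edge:
  assumes C: "is_cycle V E cs" "e \<in> cycle_edges cs" and c: "c1 \<in> set cs" "c2 \<in> set cs" "c1 \<noteq> c2"
  obtains xs where "walk E (c1 # xs @ [c2])" "e \<in> walk_edges (c1 # xs @ [c2])"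
    "distinct (c1 # xs @ [c2])" "set xs \<subseteq> set cs"
proof -
  obtain rs where R: "is_cycle V E (c1 # rs)" "cycle_edges (c1 # rs) = cycle_edges cs"
    "set (c1 # rs) = set cs"
    using cycle_rotate_to_vertex[OF C(1) c(1)] by metis
  then obtain r1 r2 where rs: "rs = r1 @ c2 # r2" using c by (metis set_ConsD split_list)
  have dist: "distinct (c1 # r1 @ c2 # r2)" and
    walks: "walk E (c1 # r1 @ [c2])" "walk E (c2 # r2 @ [c1])"
    using R(1) walk_append_iff[of E "c1 # r1" c2 "r2 @ [c1]"] unfolding rs
    by (auto simp: is_cycle_iff_walk)
  have "cycle_edges cs = walk_edges (c1 # r1 @ [c2]) \<union> walk_edges (c1 # rev r2 @ [c2])"
    using R(2) cycle_edges_closed_walk[of "c1 # rs"] walk_edges_append[of "c1 # r1" c2 "r2 @ [c1]"]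
      walk_edges_rev[of "c2 # r2 @ [c1]"] unfolding rs by simp
  moreover have "walk E (c1 # rev r2 @ [c2])" using walk_rev[OF _ walks(2)] adj_sym by auto
  ultimately show ?thesis
    using that[of r1] that[of "rev r2"] walks(1) dist R(3) C(2) unfolding rs by auto
qed

lemma cycle_edge_subset_set: "e \<in> cycle_edges cs \<Longrightarrow> e \<subseteq> set cs"
  unfolding cycle_edges_def by (auto intro!: nth_mem mod_less_divisor)

lemma cycle_minus_edge:
  assumes "is_cycle V E ds" "e \<in> cycle_edges ds"
  obtains w where "walk E w" "distinct w" "E (last w) (hd w)" "e = {last w, hd w}"
    "cycle_edges ds = insert e (walk_edges w)"
proof -
  obtain a zs where D: "is_cycle V E (a # zs)" "cycle_edges (a # zs) = cycle_edges ds"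
    "e = {last (a # zs), a}"
    using cycle_rotate_to_edge[OF assms] by metis
  then have "walk E ((a # zs) @ [a])" "distinct (a # zs)" by (auto simp: is_cycle_iff_walk)
  moreover have "cycle_edges ds = insert e (walk_edges (a # zs))"
    using D cycle_edges_closed_walk[of "a # zs"] walk_edges_append_nonempty[of "a # zs" "[a]"] by auto
  ultimately show ?thesis
    using that[of "a # zs"] walk_prefix walk_last_step D(3) by (metis list.distinct(1) list.sel(1))
qed

text \<open>An ear of \<open>cs\<close>: a path between two vertices of \<open>cs\<close> through the edge \<open>e\<close>, whose inner
  vertices avoid \<open>cs\<close>. It is cut out of a cycle through \<open>e\<close> that shares an edge with \<open>cs\<close>.\<close>

lemma cycle_ear:
  assumes C: "is_cycle V E cs" and D: "is_cycle V E ds" "e' \<in> cycle_edges ds \<inter> cycle_edges cs"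
    "e \<in> cycle_edges ds" "e \<notin> cycle_edges cs"
  obtains c1 c2 ys where "c1 \<in> set cs" "c2 \<in> set cs" "c1 \<noteq> c2" "walk E (c2 # ys @ [c1])"
    "e \<in> walk_edges (c2 # ys @ [c1])" "distinct (c2 # ys @ [c1])" "set ys \<inter> set cs = {}"
proof -
  obtain w where w: "walk E w" "distinct w" "E (last w) (hd w)" "e = {last w, hd w}"
    "cycle_edges ds = insert e (walk_edges w)"
    using cycle_minus_edge[OF D(1,3)] by blast
  then have "e' \<in> walk_edges w" using D(2,4) by auto
  then obtain p q where pq: "e' = {p, q}" "p \<noteq> q" "p \<in> set w" "q \<in> set w"
    using w(1) adj_irrefl by (auto elim: walk_edge_obtain)
  have pqc: "p \<in> set cs" "q \<in> set cs" using cycle_edge_subset_set D(2) pq(1) by auto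
  obtain w1 c1 w2 where w1: "w = w1 @ c1 # w2" "c1 \<in> set cs" "\<forall>y\<in>set w1. y \<notin> set cs"
    using split_list_first_prop[of w "\<lambda>y. y \<in> set cs"] pq(3) pqc(1) by blast
  have "\<exists>y\<in>set w2. y \<in> set cs"
    using pq(2-4) pqc w1 by (cases "p = c1") auto
  then obtain w3 c2 w4 where w2: "w2 = w3 @ c2 # w4" "c2 \<in> set cs" "\<forall>y\<in>set w4. y \<notin> set cs"
    using split_list_last_prop[of w2 "\<lambda>y. y \<in> set cs"] by blast
  have split: "w = w1 @ c1 # w3 @ c2 # w4" using w1 w2 by simp
  have "walk E (c2 # w4)" "walk E (w1 @ [c1])"
    using walk_suffix[of E "w1 @ c1 # w3" "c2 # w4"] walk_prefix[of E "w1 @ [c1]" "w3 @ c2 # w4"] w(1)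
    unfolding split by auto
  moreover have "last (c2 # w4) = last w" "hd (w1 @ [c1]) = hd w" unfolding split by (cases w1; simp)+
  ultimately have "walk E (c2 # (w4 @ w1) @ [c1])" "e \<in> walk_edges (c2 # (w4 @ w1) @ [c1])"
    using walk_append[of E "c2 # w4" "w1 @ [c1]"] w(3,4)
      walk_edges_append_nonempty[of "c2 # w4" "w1 @ [c1]"]
    by auto
  moreover have "distinct (c2 # (w4 @ w1) @ [c1])" "set (w4 @ w1) \<inter> set cs = {}" "c1 \<noteq> c2"
    using w(2) w1(3) w2(3) unfolding split by auto
  ultimately show ?thesis using that w1(2) w2(2) by blast
qed

lemma edge_rel_sym: "edge_rel V E e1 e2 \<Longrightarrow> edge_rel V E e2 e1"
  unfolding edge_rel_def by blast

lemma edge_rel_trans: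
  assumes "edge_rel V E e1 e2" "edge_rel V E e2 e3"
  shows "edge_rel V E e1 e3"
proof (cases "e1 = e2 \<or> e2 = e3")
  case False
  then obtain cs ds where C: "is_cycle V E cs" "e1 \<in> cycle_edges cs" "e2 \<in> cycle_edges cs"
    and D: "is_cycle V E ds" "e2 \<in> cycle_edges ds" "e3 \<in> cycle_edges ds"
    using assms unfolding edge_rel_def by blast
  show ?thesis
  proof (cases "e3 \<in> cycle_edges cs")
    case False
    then obtain c1 c2 ys where ear: "c1 \<in> set cs" "c2 \<in> set cs" "c1 \<noteq> c2" "walk E (c2 # ys @ [c1])"
      "e3 \<in> walk_edges (c2 # ys @ [c1])" "distinct (c2 # ys @ [c1])" "set ys \<inter> set cs = {}"
      using cycle_ear[OF C(1) D(1) _ D(3)] C(3) D(2) by blast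
    obtain xs where arc: "walk E (c1 # xs @ [c2])" "e1 \<in> walk_edges (c1 # xs @ [c2])"
      "distinct (c1 # xs @ [c2])" "set xs \<subseteq> set cs"
      using cycle_arc_through_edge[OF C(1,2) ear(1-3)] by blast
    have "xs @ ys \<noteq> []"
    proof
      assume "xs @ ys = []"
      then have "e1 = e3" using arc(2) ear(5) by (auto simp: insert_commute)
      then show False using C(2) \<open>e3 \<notin> cycle_edges cs\<close> by simp
    qed
    moreover have "distinct (c1 # xs @ c2 # ys)" using arc(3,4) ear(1,2,6,7) by auto
    ultimately show ?thesis
      using cycle_of_two_paths[OF arc(1) ear(4)] arc(2) ear(5) unfolding edge_rel_def by blast
  qed (use C in \<open>auto simp: edge_rel_def\<close>)
qed (use assms in auto)

definition lobe_of :: "'a set \<Rightarrow> 'a set set" where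
  "lobe_of e = {e' \<in> edges V E. edge_rel V E e e'}"

abbreviation Lobes :: "'a set set set" where
  "Lobes \<equiv> lobes V E"

definition lobe_adj :: "'a set set \<Rightarrow> 'a \<Rightarrow> 'a \<Rightarrow> bool" where
  "lobe_adj L u v \<longleftrightarrow> {u, v} \<in> L"

definition adj_avoiding :: "'a set set \<Rightarrow> 'a \<Rightarrow> 'a \<Rightarrow> bool" where
  "adj_avoiding L u v \<longleftrightarrow> E u v \<and> {u, v} \<notin> L"

lemma in_lobes_iff: "L \<in> Lobes \<longleftrightarrow> (\<exists>e\<in>edges V E. L = lobe_of e)"
  unfolding lobes_def lobe_of_def by blast

lemma lobe_of_in_lobes: "e \<in> edges V E \<Longrightarrow> lobe_of e \<in> Lobes"
  unfolding in_lobes_iff by blast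

lemma mem_lobe_of: "e \<in> edges V E \<Longrightarrow> e \<in> lobe_of e"
  unfolding lobe_of_def edge_rel_def by auto

lemma lobe_subset_edges: "L \<in> Lobes \<Longrightarrow> L \<subseteq> edges V E"
  unfolding in_lobes_iff lobe_of_def by auto

lemma lobe_vertices_subset: "L \<in> Lobes \<Longrightarrow> \<Union>L \<subseteq> V"
  using lobe_subset_edges by (auto simp: edges_def)

lemma lobe_eq_lobe_of: "L \<in> Lobes \<Longrightarrow> f \<in> L \<Longrightarrow> L = lobe_of f"
proof -
  assume "L \<in> Lobes" "f \<in> L"
  then obtain e where e: "L = lobe_of e" "edge_rel V E e f" by (auto simp: in_lobes_iff lobe_of_def)
  show "L = lobe_of f"
    unfolding e(1) lobe_of_def using e(2) edge_rel_trans edge_rel_sym by blast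
qed

lemma lobes_eq_if_common_edge: "L1 \<in> Lobes \<Longrightarrow> L2 \<in> Lobes \<Longrightarrow> f \<in> L1 \<Longrightarrow> f \<in> L2 \<Longrightarrow> L1 = L2"
  using lobe_eq_lobe_of by metis

lemma lobe_edgeE:
  assumes "L \<in> Lobes" "e \<in> L"
  obtains a b where "e = {a, b}" "E a b" "a \<in> \<Union>L" "b \<in> \<Union>L"
  using assms lobe_subset_edges by (blast elim: edgesE)

lemma lobe_has_edge: "L \<in> Lobes \<Longrightarrow> \<exists>a b. a \<noteq> b \<and> {a, b} \<in> L"
  unfolding in_lobes_iff using mem_lobe_of adj_irrefl by (blast elim: edgesE)

lemma cycle_edges_subset_lobe:
  assumes "L \<in> Lobes" "is_cycle V E cs" "f \<in> cycle_edges cs" "f \<in> L"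
  shows "cycle_edges cs \<subseteq> L"
  using assms lobe_eq_lobe_of[of L f] cycle_edges_subset_edges
  unfolding lobe_of_def edge_rel_def by blast

lemma lobe_adj_imp_adj: "L \<in> Lobes \<Longrightarrow> lobe_adj L u v \<Longrightarrow> E u v"
  unfolding lobe_adj_def using lobe_subset_edges doubleton_in_edges_iff by blast

lemma symp_lobe_adj: "symp (lobe_adj L)"
  unfolding lobe_adj_def by (rule sympI) (simp add: insert_commute)

lemma symp_adj_avoiding: "symp (adj_avoiding L)"
  unfolding adj_avoiding_def by (rule sympI) (simp add: adj_sym insert_commute)

lemma lobe_adj_imp_adj_avoiding:
  "L1 \<in> Lobes \<Longrightarrow> L2 \<in> Lobes \<Longrightarrow> L1 \<noteq> L2 \<Longrightarrow> lobe_adj L1 u v \<Longrightarrow> adj_avoiding L2 u v"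
  unfolding adj_avoiding_def using lobe_adj_imp_adj lobes_eq_if_common_edge unfolding lobe_adj_def
  by blast

lemma walk_lobe_adj_edges: "walk (lobe_adj L) xs \<Longrightarrow> walk_edges xs \<subseteq> L"
  by (auto elim: walk_edge_obtain simp: lobe_adj_def)

lemma walk_adj_avoiding_edges: "walk (adj_avoiding L) xs \<Longrightarrow> walk_edges xs \<inter> L = {}"
  by (auto elim: walk_edge_obtain simp: adj_avoiding_def)

lemma walk_lobe_adj_vertices: "walk (lobe_adj L) xs \<Longrightarrow> 2 \<le> length xs \<Longrightarrow> set xs \<subseteq> \<Union>L"
proof (induction xs rule: induct_list012)
  case (3 x y zs)
  then show ?case by (cases zs) (auto simp: lobe_adj_def)
qed auto

text \<open>Any two edges of a lobe lie on a common cycle, all of whose edges belong to the lobe.\<close>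

lemma lobe_connected:
  assumes L: "L \<in> Lobes" and u: "u \<in> \<Union>L" and v: "v \<in> \<Union>L"
  shows "(lobe_adj L)\<^sup>*\<^sup>* u v"
proof -
  obtain e where e: "e \<in> edges V E" "L = lobe_of e" using L by (auto simp: in_lobes_iff)
  then have eL: "e \<in> L" using mem_lobe_of by auto
  have from_e: "(lobe_adj L)\<^sup>*\<^sup>* a z" if a: "a \<in> e" and z: "z \<in> \<Union>L" for a z
  proof -
    obtain f where f: "f \<in> L" "z \<in> f" using z by blast
    show ?thesis
    proof (cases "e = f")
      case True
      then show ?thesis using a f eL e(1) unfolding lobe_adj_def
        by (auto elim!: edgesE simp: insert_commute)
    next
      case False
      then obtain cs where cs: "is_cycle V E cs" "e \<in> cycle_edges cs" "f \<in> cycle_edges cs"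
        using f e unfolding lobe_of_def edge_rel_def by blast
      have wc: "walk E (cs @ [hd cs])" using cs(1) by (simp add: is_cycle_iff_walk)
      note ce = cycle_edges_closed_walk[of cs]
      have wL: "walk (lobe_adj L) (cs @ [hd cs])"
        using walk_mono[OF wc, of "lobe_adj L"] cycle_edges_subset_lobe[OF L cs(1,2) eL] ce
        unfolding lobe_adj_def by auto
      have "a \<in> set (cs @ [hd cs])" "z \<in> set (cs @ [hd cs])"
        using cycle_edge_subset_set[OF cs(2)] cycle_edge_subset_set[OF cs(3)] a f(2) by auto
      then show ?thesis
        using walk_rtranclp_member[OF wL] sympD[OF symp_rtranclp[OF symp_lobe_adj]]
        by (meson rtranclp_trans)
    qed
  qed
  obtain a where "a \<in> e" using e(1) by (auto elim: edgesE)
  then show ?thesis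
    using from_e u v sympD[OF symp_rtranclp[OF symp_lobe_adj]] by (meson rtranclp_trans)
qed

text \<open>Two vertices of a lobe joined by a path avoiding the lobe's edges would close a cycle through
  an edge of the lobe and an edge outside it.\<close>

lemma lobe_no_detour:
  assumes L: "L \<in> Lobes" and a: "a \<in> \<Union>L" and b: "b \<in> \<Union>L" and p: "(adj_avoiding L)\<^sup>*\<^sup>* a b"
  shows "a = b"
proof (rule ccontr)
  assume ab: "a \<noteq> b"
  obtain ps where ps: "walk (adj_avoiding L) ps" "distinct ps" "hd ps = a" "last ps = b"
    using rtranclp_walk[OF p] walk_distinct by metis
  then obtain ps' where ps': "ps = a # ps'" by (cases ps) auto
  have "b \<in> set ps'" using ps' ps(4) ab by (cases ps') auto
  then obtain q1 c q2 where q: "ps' = q1 @ c # q2" "c \<in> \<Union>L" "\<forall>y\<in>set q1. y \<notin> \<Union>L"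
    using split_list_first_prop[of ps' "\<lambda>y. y \<in> \<Union>L"] b by blast
  have out: "walk (adj_avoiding L) (a # q1 @ [c])" "distinct (a # q1 @ [c])"
    using ps(1,2) walk_prefix[of "adj_avoiding L" "a # q1 @ [c]" q2] unfolding ps' q by auto
  obtain rs where rs: "walk (lobe_adj L) rs" "distinct rs" "hd rs = c" "last rs = a"
    using rtranclp_walk[OF lobe_connected[OF L q(2) a]] walk_distinct by metis
  have "c \<noteq> a" using ps(2) unfolding ps' q by auto
  then have "rs = c # butlast (tl rs) @ [a]" using rs(1,3,4)
    by (cases rs) (auto simp: append_butlast_last_id)
  then obtain r where r: "rs = c # r @ [a]" by blast
  have "set r \<subseteq> \<Union>L" using walk_lobe_adj_vertices[OF rs(1)] r by auto
  then have dist: "distinct (a # q1 @ c # r)" using out(2) rs(2) r q(3) by auto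
  have ne: "q1 @ r \<noteq> []"
  proof
    assume "q1 @ r = []"
    then show False using out(1) rs(1) r unfolding adj_avoiding_def lobe_adj_def
      by (simp add: insert_commute)
  qed
  have walks: "walk E (a # q1 @ [c])" "walk E (c # r @ [a])"
    using walk_mono[OF out(1)] walk_mono[OF rs(1)] lobe_adj_imp_adj[OF L]
    unfolding r adj_avoiding_def by auto
  note cyc = cycle_of_two_paths[OF walks dist ne]
  have "{c, hd (r @ [a])} \<in> walk_edges (c # r @ [a])" "{a, hd (q1 @ [c])} \<in> walk_edges (a # q1 @ [c])"
    by (cases r; simp) (cases q1; simp)
  moreover have "walk_edges (c # r @ [a]) \<subseteq> L" "walk_edges (a # q1 @ [c]) \<inter> L = {}"
    using walk_lobe_adj_edges[OF rs(1)] walk_adj_avoiding_edges[OF out(1)] r by auto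
  ultimately show False
    using cycle_edges_subset_lobe[OF L cyc(1)] cyc(2) by blast
qed

end

section \<open>The tree of lobes\<close>

locale connected_sgraph = sgraph +
  assumes connected: "connected_graph V E"
begin

lemma adj_avoiding_connected_other_lobe:
  "L1 \<in> Lobes \<Longrightarrow> L2 \<in> Lobes \<Longrightarrow> L1 \<noteq> L2 \<Longrightarrow> u \<in> \<Union>L1 \<Longrightarrow> v \<in> \<Union>L1 \<Longrightarrow> (adj_avoiding L2)\<^sup>*\<^sup>* u v"
  using lobe_connected[of L1 u v] lobe_adj_imp_adj_avoiding[of L1 L2]
  by (metis (no_types, lifting) mono_rtranclp)

lemma reaches_lobe_avoiding: "L \<in> Lobes \<Longrightarrow> x \<in> V \<Longrightarrow> \<exists>a\<in>\<Union>L. (adj_avoiding L)\<^sup>*\<^sup>* x a"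
proof -
  assume L: "L \<in> Lobes" and x: "x \<in> V"
  obtain b where b: "b \<in> \<Union>L" using lobe_has_edge[OF L] by blast
  then have "E\<^sup>*\<^sup>* x b" using connected x lobe_vertices_subset[OF L] unfolding connected_graph_def
    by blast
  from rtranclp_first_hit[OF this, of L] show ?thesis
    using b unfolding adj_avoiding_def[abs_def] by blast
qed

lemma reaches_lobe_avoiding_unique:
  "L \<in> Lobes \<Longrightarrow> a \<in> \<Union>L \<Longrightarrow> a' \<in> \<Union>L \<Longrightarrow> (adj_avoiding L)\<^sup>*\<^sup>* x a \<Longrightarrow> (adj_avoiding L)\<^sup>*\<^sup>* x a' \<Longrightarrow> a = a'"
  using lobe_no_detour sympD[OF symp_rtranclp[OF symp_adj_avoiding]] by (meson rtranclp_trans)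

lemma vertex_in_some_lobe:
  assumes "Lobes \<noteq> {}" "x \<in> V"
  obtains L where "L \<in> Lobes" "x \<in> \<Union>L"
proof -
  obtain L where L: "L \<in> Lobes" using assms(1) by blast
  obtain a b where ab: "a \<noteq> b" "{a, b} \<in> L" using lobe_has_edge[OF L] by blast
  then obtain y where y: "y \<in> \<Union>L" "y \<noteq> x" by blast
  then have "E\<^sup>*\<^sup>* x y" using connected assms(2) lobe_vertices_subset[OF L]
    unfolding connected_graph_def by blast
  then obtain z where "E x z" using y(2) by (metis converse_rtranclpE)
  then show ?thesis
    using that[of "lobe_of {x, z}"] lobe_of_in_lobes mem_lobe_of doubleton_in_edges_iff by blast
qed

end

text \<open>Rooting the block structure at the lobe \<open>R\<close>: every other lobe \<open>L\<close> hangs from a unique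
  vertex \<open>attach L\<close>, the only vertex of \<open>L\<close> reachable from \<open>R\<close> without using edges of \<open>L\<close>.\<close>

locale lobe_tree = connected_sgraph +
  fixes R :: "'a set set"
  assumes root: "R \<in> lobes V E"
begin

definition attach :: "'a set set \<Rightarrow> 'a" where
  "attach L = (THE c. c \<in> \<Union>L \<and> (\<exists>r\<in>\<Union>R. (adj_avoiding L)\<^sup>*\<^sup>* r c))"

lemma attach:
  assumes L: "L \<in> Lobes" "L \<noteq> R"
  shows "attach L \<in> \<Union>L" "\<And>r. r \<in> \<Union>R \<Longrightarrow> (adj_avoiding L)\<^sup>*\<^sup>* r (attach L)"
proof -
  obtain r0 where r0: "r0 \<in> \<Union>R" using lobe_has_edge[OF root] by blast
  obtain a where a: "a \<in> \<Union>L" "(adj_avoiding L)\<^sup>*\<^sup>* r0 a"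
    using reaches_lobe_avoiding[OF L(1)] r0 lobe_vertices_subset[OF root] by blast
  have all: "(adj_avoiding L)\<^sup>*\<^sup>* r a" if "r \<in> \<Union>R" for r
    using adj_avoiding_connected_other_lobe[OF root L(1) L(2)[symmetric] that r0] a(2)
    by (meson rtranclp_trans)
  have "attach L = a" unfolding attach_def
  proof (rule the_equality)
    show "a \<in> \<Union>L \<and> (\<exists>r\<in>\<Union>R. (adj_avoiding L)\<^sup>*\<^sup>* r a)" using a r0 by blast
  next
    fix c assume "c \<in> \<Union>L \<and> (\<exists>r\<in>\<Union>R. (adj_avoiding L)\<^sup>*\<^sup>* r c)"
    then show "c = a" using reaches_lobe_avoiding_unique[OF L(1)] all a(1) by blast
  qed
  then show "attach L \<in> \<Union>L" "\<And>r. r \<in> \<Union>R \<Longrightarrow> (adj_avoiding L)\<^sup>*\<^sup>* r (attach L)" using a all by auto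
qed

lemma attach_unique:
  "L \<in> Lobes \<Longrightarrow> L \<noteq> R \<Longrightarrow> c \<in> \<Union>L \<Longrightarrow> r \<in> \<Union>R \<Longrightarrow> (adj_avoiding L)\<^sup>*\<^sup>* r c \<Longrightarrow> attach L = c"
  using attach reaches_lobe_avoiding_unique by blast

lemma attach_eq_root_vertex: "L \<in> Lobes \<Longrightarrow> L \<noteq> R \<Longrightarrow> c \<in> \<Union>L \<Longrightarrow> c \<in> \<Union>R \<Longrightarrow> attach L = c"
  using attach_unique by blast

lemma attach_eq_shared_vertex:
  assumes L: "L \<in> Lobes" and M: "M \<in> Lobes" and ne: "L \<noteq> M" and c: "c \<in> \<Union>L" "c \<in> \<Union>M"
    and M_above: "M = R \<or> attach M \<noteq> c"
  shows "L \<noteq> R" "attach L = c"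
proof -
  show LR: "L \<noteq> R"
    using attach_eq_root_vertex[OF M _ c(2)] c(1) ne M_above by auto
  show "attach L = c"
  proof (cases "M = R")
    case True then show ?thesis using attach_eq_root_vertex[OF L LR c(1)] c(2) by simp
  next
    case False
    obtain r where r: "r \<in> \<Union>R" using lobe_has_edge[OF root] by blast
    from rtranclp_first_hit[OF attach(2)[OF M False r], of L] show ?thesis
    proof (elim disjE bexE)
      assume "(\<lambda>u v. adj_avoiding M u v \<and> {u, v} \<notin> L)\<^sup>*\<^sup>* r (attach M)"
      then have "(adj_avoiding L)\<^sup>*\<^sup>* r (attach M)"
        by (rule mono_rtranclp[rule_format, rotated]) (simp add: adj_avoiding_def)
      moreover have "(adj_avoiding L)\<^sup>*\<^sup>* (attach M) c"
        using adj_avoiding_connected_other_lobe[OF M L ne[symmetric] attach(1)[OF M False] c(2)] .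
      ultimately show ?thesis using attach_unique[OF L LR c(1) r] rtranclp_trans by metis
    next
      fix a assume a: "a \<in> \<Union>L" "(\<lambda>u v. adj_avoiding M u v \<and> {u, v} \<notin> L)\<^sup>*\<^sup>* r a"
      have "(adj_avoiding M)\<^sup>*\<^sup>* r a" using a(2) by (rule mono_rtranclp[rule_format, rotated]) simp
      moreover have "(adj_avoiding M)\<^sup>*\<^sup>* a c"
        using adj_avoiding_connected_other_lobe[OF L M ne a(1) c(1)] .
      ultimately have "attach M = c" using attach_unique[OF M False c(2) r] rtranclp_trans by metis
      then show ?thesis using M_above False by simp
    qed
  qed
qed

definition root_dist :: "'a \<Rightarrow> nat" where
  "root_dist x = (LEAST n. \<exists>r\<in>\<Union>R. (E ^^ n) r x)"

lemma root_dist: "x \<in> V \<Longrightarrow> \<exists>r\<in>\<Union>R. (E ^^ root_dist x) r x"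
proof -
  assume x: "x \<in> V"
  obtain r0 where r0: "r0 \<in> \<Union>R" using lobe_has_edge[OF root] by blast
  then have "E\<^sup>*\<^sup>* r0 x" using connected x lobe_vertices_subset[OF root]
    unfolding connected_graph_def by blast
  then obtain n where "(E ^^ n) r0 x" using rtranclp_imp_relpowp by metis
  then have "\<exists>n. \<exists>r\<in>\<Union>R. (E ^^ n) r x" using r0 by blast
  then show ?thesis unfolding root_dist_def by (rule LeastI_ex)
qed

lemma root_dist_le: "r \<in> \<Union>R \<Longrightarrow> (E ^^ n) r x \<Longrightarrow> root_dist x \<le> n"
  unfolding root_dist_def by (rule Least_le) blast

lemma root_dist_eq_0_iff: "x \<in> V \<Longrightarrow> root_dist x = 0 \<longleftrightarrow> x \<in> \<Union>R"
  using root_dist root_dist_le[of x 0 x] by fastforce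

lemma relpowp_first_hit:
  "(E ^^ n) r y \<Longrightarrow> (adj_avoiding L)\<^sup>*\<^sup>* r y \<or> (\<exists>m<n. \<exists>a\<in>\<Union>L. (E ^^ m) r a \<and> (adj_avoiding L)\<^sup>*\<^sup>* r a)"
proof (induction n arbitrary: y)
  case (Suc n)
  then obtain z where z: "(E ^^ n) r z" "E z y" by (meson relpowp_Suc_E)
  from Suc.IH[OF z(1)] show ?case
  proof (elim disjE)
    assume h: "(adj_avoiding L)\<^sup>*\<^sup>* r z"
    show ?thesis
    proof (cases "{z, y} \<in> L")
      case True
      then show ?thesis using h z(1) by blast
    next
      case False
      then have "adj_avoiding L z y" using z(2) unfolding adj_avoiding_def by simp
      then show ?thesis using h by (meson rtranclp.rtrancl_into_rtrancl)
    qed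
  qed (blast intro: less_SucI)
qed simp

lemma root_dist_attach_less:
  assumes L: "L \<in> Lobes" "L \<noteq> R" and y: "y \<in> \<Union>L" "y \<noteq> attach L"
  shows "root_dist (attach L) < root_dist y"
proof -
  have "y \<in> V" using y lobe_vertices_subset[OF L(1)] by blast
  then obtain r where r: "r \<in> \<Union>R" "(E ^^ root_dist y) r y" using root_dist by blast
  from relpowp_first_hit[OF r(2), of L] show ?thesis
  proof (elim disjE exE conjE bexE)
    assume "(adj_avoiding L)\<^sup>*\<^sup>* r y"
    then show ?thesis using attach_unique[OF L y(1) r(1)] y(2) by simp
  next
    fix m a assume "m < root_dist y" "a \<in> \<Union>L" "(E ^^ m) r a" "(adj_avoiding L)\<^sup>*\<^sup>* r a"
    then show ?thesis using attach_unique[OF L _ r(1)] root_dist_le[OF r(1)] by fastforce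
  qed
qed

text \<open>The home of a vertex \<open>x\<close> is the unique lobe through \<open>x\<close> that does not hang from \<open>x\<close>, or the root
  lobe. For \<open>x\<close> outside the root lobe, the lobe of the last edge of a shortest path from the root
  to \<open>x\<close> qualifies.\<close>

lemma home_exists:
  assumes x: "x \<in> V"
  shows "\<exists>N\<in>Lobes. x \<in> \<Union>N \<and> (N = R \<or> attach N \<noteq> x)"
proof (cases "x \<in> \<Union>R")
  case False
  obtain r where r: "r \<in> \<Union>R" "(E ^^ root_dist x) r x" using root_dist[OF x] by blast
  obtain n where n: "root_dist x = Suc n" using root_dist_eq_0_iff x False by (cases "root_dist x") auto
  then obtain z where z: "(E ^^ n) r z" "E z x" using r(2) by (metis relpowp_Suc_E)
  let ?N = "lobe_of {z, x}"
  have N: "?N \<in> Lobes" "{z, x} \<in> ?N"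
    using z(2) lobe_of_in_lobes mem_lobe_of doubleton_in_edges_iff by blast+
  then have NR: "?N \<noteq> R" using False by blast
  have "attach ?N \<noteq> x"
  proof
    assume "attach ?N = x"
    then have "root_dist x < root_dist z"
      using root_dist_attach_less[OF N(1) NR] N(2) adj_irrefl[OF z(2)] by fastforce
    then show False using root_dist_le[OF r(1) z(1)] n by simp
  qed
  then show ?thesis using N by blast
qed (use root in blast)

lemma home_unique:
  assumes "N1 \<in> Lobes" "x \<in> \<Union>N1" "N1 = R \<or> attach N1 \<noteq> x"
    and "N2 \<in> Lobes" "x \<in> \<Union>N2" "N2 = R \<or> attach N2 \<noteq> x"
  shows "N1 = N2"
  using attach_eq_shared_vertex(2)[of N1 N2 x] attach_eq_shared_vertex(2)[of N2 N1 x] assms by metis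

definition home :: "'a \<Rightarrow> 'a set set" where
  "home x = (THE N. N \<in> Lobes \<and> x \<in> \<Union>N \<and> (N = R \<or> attach N \<noteq> x))"

lemma home_eqI:
  assumes "N \<in> Lobes" "x \<in> \<Union>N" "N = R \<or> attach N \<noteq> x"
  shows "home x = N"
  unfolding home_def
proof (rule the_equality)
  fix N' assume "N' \<in> Lobes \<and> x \<in> \<Union>N' \<and> (N' = R \<or> attach N' \<noteq> x)"
  then show "N' = N" using home_unique[of N' x N] assms by blast
qed (use assms in blast)

lemma home: "x \<in> V \<Longrightarrow> home x \<in> Lobes \<and> x \<in> \<Union>(home x) \<and> (home x = R \<or> attach (home x) \<noteq> x)"
  using home_exists home_eqI by metis

definition parent :: "'a set set \<Rightarrow> 'a set set" where
  "parent L = home (attach L)"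

lemma parent:
  assumes L: "L \<in> Lobes" "L \<noteq> R"
  shows "parent L \<in> Lobes" "attach L \<in> \<Union>(parent L)" "parent L \<noteq> L"
    "parent L \<noteq> R \<Longrightarrow> attach (parent L) \<noteq> attach L"
proof -
  have "attach L \<in> V" using attach(1)[OF L] lobe_vertices_subset[OF L(1)] by blast
  then show "parent L \<in> Lobes" "attach L \<in> \<Union>(parent L)"
    and *: "parent L \<noteq> R \<Longrightarrow> attach (parent L) \<noteq> attach L"
    using home unfolding parent_def by auto
  then show "parent L \<noteq> L" using L by metis
qed

lemma parent_eq_shared:
  assumes "L \<in> Lobes" "M \<in> Lobes" "L \<noteq> M" "c \<in> \<Union>L" "c \<in> \<Union>M" "M = R \<or> attach M \<noteq> c"
  shows "parent L = M"
  using attach_eq_shared_vertex(2)[OF assms] home_eqI[OF assms(2,5,6)] unfolding parent_def by simp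

definition rank :: "'a set set \<Rightarrow> nat" where
  "rank L = (if L = R then 0 else Suc (root_dist (attach L)))"

lemma rank_parent_less: "L \<in> Lobes \<Longrightarrow> L \<noteq> R \<Longrightarrow> rank (parent L) < rank L"
proof (cases "parent L = R")
  case False
  assume L: "L \<in> Lobes" "L \<noteq> R"
  have "root_dist (attach (parent L)) < root_dist (attach L)"
    using root_dist_attach_less[OF parent(1)[OF L] False parent(2)[OF L]] parent(4)[OF L False] by simp
  then show ?thesis using L False unfolding rank_def by simp
qed (simp add: rank_def)

end

section \<open>Automorphisms and orbit-preserving isomorphisms\<close>

lemma bij_betw_remove_point:
  assumes f: "bij_betw f A B" and "a \<in> A" "b \<in> B"
  shows "bij_betw (\<lambda>x. if f x = b then f a else f x) (A - {a}) (B - {b})"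
proof -
  have "inj_on f A" "f ` A = B" using f by (auto simp: bij_betw_def)
  then show ?thesis
    using assms(2,3) unfolding bij_betw_def inj_on_def by (auto simp: image_iff)
qed

lemma orbit_of_iff: "y \<in> orbit_of G x \<longleftrightarrow> (\<exists>f\<in>G. y = f x)"
  unfolding orbit_of_def by blast

lemma edge_image_comp: "edge_image (g \<circ> f) L = edge_image g (edge_image f L)"
  unfolding edge_image_def by (simp add: image_comp)

lemma Union_edge_image: "\<Union>(edge_image f L) = f ` \<Union>L"
  unfolding edge_image_def by (simp add: image_Union)

lemma edge_image_inv_into:
  assumes "\<Union>L \<subseteq> V"
  shows "inj_on f V \<Longrightarrow> edge_image (inv_into V f) (edge_image f L) = L"
    and "f ` V = V \<Longrightarrow> edge_image f (edge_image (inv_into V f) L) = L"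
proof -
  have "edge_image g (edge_image h L) = L" if "\<And>x. x \<in> V \<Longrightarrow> g (h x) = x" for g h :: "'a \<Rightarrow> 'a"
  proof -
    have "(\<lambda>e. g ` h ` e) ` L = (\<lambda>e. e) ` L"
      using assms that by (intro image_cong refl) (force simp: image_image)
    then show ?thesis unfolding edge_image_def by (simp add: image_image)
  qed
  then show "inj_on f V \<Longrightarrow> edge_image (inv_into V f) (edge_image f L) = L"
    and "f ` V = V \<Longrightarrow> edge_image f (edge_image (inv_into V f) L) = L"
    by (auto simp: f_inv_into_f)
qed

context sgraph
begin

abbreviation Aut :: "('a \<Rightarrow> 'a) set" where
  "Aut \<equiv> automorphisms V E"

lemma automorphismsD:
  assumes "f \<in> Aut"
  shows "bij_betw f V V" "inj_on f V" "f ` V = V" "x \<in> V \<Longrightarrow> f x \<in> V" "E u v \<Longrightarrow> E (f u) (f v)"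
proof -
  show b: "bij_betw f V V" using assms unfolding automorphisms_def by blast
  then show "inj_on f V" "f ` V = V" "x \<in> V \<Longrightarrow> f x \<in> V"
    by (auto simp: bij_betw_def)
  show "E u v \<Longrightarrow> E (f u) (f v)" using assms adj_imp_vertex unfolding automorphisms_def by blast
qed

lemma id_automorphism: "id \<in> Aut"
  unfolding automorphisms_def by auto

lemma automorphisms_comp: "f \<in> Aut \<Longrightarrow> g \<in> Aut \<Longrightarrow> g \<circ> f \<in> Aut"
proof -
  assume f: "f \<in> Aut" and g: "g \<in> Aut"
  have "E u v \<longleftrightarrow> E (g (f u)) (g (f v))" if "u \<in> V" "v \<in> V" for u v
    using f g that automorphismsD(4)[OF f] unfolding automorphisms_def by blast
  then show ?thesis
    using bij_betw_trans[OF automorphismsD(1)[OF f] automorphismsD(1)[OF g]]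
    unfolding automorphisms_def by simp
qed

lemma automorphism_inv_cancel:
  assumes "f \<in> Aut" "x \<in> V"
  shows "inv_into V f (f x) = x" "f (inv_into V f x) = x"
  using inv_into_f_f[OF automorphismsD(2)[OF assms(1)] assms(2)] f_inv_into_f[of x f V]
    automorphismsD(3)[OF assms(1)] assms(2) by auto

lemma automorphisms_inv: "f \<in> Aut \<Longrightarrow> inv_into V f \<in> Aut"
proof -
  assume f: "f \<in> Aut"
  have b: "bij_betw (inv_into V f) V V" using automorphismsD(1)[OF f] bij_betw_inv_into by blast
  have "E u v \<longleftrightarrow> E (inv_into V f u) (inv_into V f v)" if "u \<in> V" "v \<in> V" for u v
  proof -
    have "inv_into V f u \<in> V" "inv_into V f v \<in> V" using b that bij_betwE by blast+
    then have "E (inv_into V f u) (inv_into V f v) \<longleftrightarrow> E (f (inv_into V f u)) (f (inv_into V f v))"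
      using f unfolding automorphisms_def by blast
    then show ?thesis using automorphism_inv_cancel(2)[OF f] that by simp
  qed
  then show ?thesis using b unfolding automorphisms_def by blast
qed

lemma automorphism_edge_image_cancel:
  assumes "f \<in> Aut" "L \<in> Lobes"
  shows "edge_image (inv_into V f) (edge_image f L) = L" "edge_image f (edge_image (inv_into V f) L) = L"
  using edge_image_inv_into[OF lobe_vertices_subset[OF assms(2)]] automorphismsD(2,3)[OF assms(1)]
  by simp_all

lemma automorphism_edge: "f \<in> Aut \<Longrightarrow> e \<in> edges V E \<Longrightarrow> f ` e \<in> edges V E"
  using automorphismsD(5) by (auto elim!: edgesE simp: doubleton_in_edges_iff)

lemma automorphism_cycle:
  assumes f: "f \<in> Aut" and c: "is_cycle V E cs"
  shows "is_cycle V E (map f cs)" "cycle_edges (map f cs) = (\<lambda>e. f ` e) ` cycle_edges cs"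
proof -
  have c': "3 \<le> length cs" "distinct cs" "set cs \<subseteq> V" "walk E (cs @ [hd cs])"
    using c by (auto simp: is_cycle_iff_walk)
  have "distinct (map f cs)"
    using c'(2,3) automorphismsD(2)[OF f] by (simp add: distinct_map inj_on_subset)
  moreover have "set (map f cs) \<subseteq> V" using c'(3) automorphismsD(4)[OF f] by auto
  moreover have "map f cs @ [hd (map f cs)] = map f (cs @ [hd cs])" using c'(1) by (cases cs) auto
  moreover have "walk E (map f (cs @ [hd cs]))" using walk_map[OF c'(4)] automorphismsD(5)[OF f] by blast
  ultimately show "is_cycle V E (map f cs)" using c'(1) by (simp add: is_cycle_iff_walk)
  show "cycle_edges (map f cs) = (\<lambda>e. f ` e) ` cycle_edges cs"
    using c'(1) cycle_edges_closed_walk[of "map f cs"] cycle_edges_closed_walk[of cs]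
      walk_edges_map[of f "cs @ [hd cs]"]
    by (cases cs) auto
qed

lemma automorphism_edge_rel: "f \<in> Aut \<Longrightarrow> edge_rel V E e1 e2 \<Longrightarrow> edge_rel V E (f ` e1) (f ` e2)"
  unfolding edge_rel_def using automorphism_cycle by blast

lemma automorphism_lobe_of_subset: "f \<in> Aut \<Longrightarrow> edge_image f (lobe_of e) \<subseteq> lobe_of (f ` e)"
  unfolding edge_image_def lobe_of_def using automorphism_edge automorphism_edge_rel by blast

lemma automorphism_lobe_of:
  assumes f: "f \<in> Aut" and e: "e \<in> edges V E"
  shows "edge_image f (lobe_of e) = lobe_of (f ` e)"
proof
  let ?g = "inv_into V f"
  have "e \<subseteq> V" using e unfolding edges_def by blast
  then have "?g ` f ` e = (\<lambda>x. x) ` e"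
    unfolding image_image by (intro image_cong) (auto simp: automorphism_inv_cancel(1)[OF f])
  then have "?g ` f ` e = e" by simp
  then have "edge_image ?g (lobe_of (f ` e)) \<subseteq> lobe_of e"
    using automorphism_lobe_of_subset[OF automorphisms_inv[OF f]] by metis
  then have "edge_image f (edge_image ?g (lobe_of (f ` e))) \<subseteq> edge_image f (lobe_of e)"
    unfolding edge_image_def by blast
  moreover have "edge_image f (edge_image ?g (lobe_of (f ` e))) = lobe_of (f ` e)"
    using automorphism_edge_image_cancel(2)[OF f] lobe_of_in_lobes automorphism_edge[OF f e] by blast
  ultimately show "lobe_of (f ` e) \<subseteq> edge_image f (lobe_of e)" by simp
qed (rule automorphism_lobe_of_subset[OF f])

lemma automorphism_lobe: "f \<in> Aut \<Longrightarrow> L \<in> Lobes \<Longrightarrow> edge_image f L \<in> Lobes"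
  unfolding in_lobes_iff using automorphism_lobe_of automorphism_edge by metis

lemma automorphism_lobe_iso: "f \<in> Aut \<Longrightarrow> L \<in> Lobes \<Longrightarrow> lobe_iso L (edge_image f L) f"
proof -
  assume f: "f \<in> Aut" and L: "L \<in> Lobes"
  have inj: "inj_on f (\<Union>L)" using automorphismsD(2)[OF f] lobe_vertices_subset[OF L] inj_on_subset
    by blast
  have "{x, y} \<in> L" if xy: "x \<in> \<Union>L" "y \<in> \<Union>L" "{f x, f y} \<in> edge_image f L" for x y
  proof -
    obtain e where "e \<in> L" "f ` e = {f x, f y}" using xy(3) unfolding edge_image_def by auto
    then obtain a b where ab: "{a, b} \<in> L" "f ` {a, b} = {f x, f y}" "a \<in> \<Union>L" "b \<in> \<Union>L"
      using L by (metis lobe_edgeE)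
    then have "{a, b} = {x, y}" using inj_onD[OF inj] xy(1,2) by (auto simp: doubleton_eq_iff)
    then show ?thesis using ab(1) by simp
  qed
  then show ?thesis
    using inj Union_edge_image[of f L] unfolding lobe_iso_def bij_betw_def edge_image_def
    by (auto intro: image_eqI[where x = "{_, _}"])
qed

lemma lobe_iso_edge_image:
  assumes L: "L \<in> Lobes" and M: "M \<in> Lobes" and g: "lobe_iso L M g"
  shows "edge_image g L = M"
proof (rule equalityI)
  have img: "g ` \<Union>L = \<Union>M"
    and edge: "\<And>x y. x \<in> \<Union>L \<Longrightarrow> y \<in> \<Union>L \<Longrightarrow> {x, y} \<in> L \<longleftrightarrow> {g x, g y} \<in> M"
    using g unfolding lobe_iso_def bij_betw_def by blast+
  show "edge_image g L \<subseteq> M"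
  proof
    fix e' assume "e' \<in> edge_image g L"
    then obtain e where "e \<in> L" "e' = g ` e" unfolding edge_image_def by blast
    moreover obtain a b where "e = {a, b}" "a \<in> \<Union>L" "b \<in> \<Union>L" by (rule lobe_edgeE[OF L \<open>e \<in> L\<close>])
    ultimately show "e' \<in> M" using edge[of a b] by simp
  qed
  show "M \<subseteq> edge_image g L"
  proof
    fix e assume "e \<in> M"
    then obtain a' b' where "e = {a', b'}" "a' \<in> \<Union>M" "b' \<in> \<Union>M" by (rule lobe_edgeE[OF M])
    moreover have "a' \<in> g ` \<Union>L" "b' \<in> g ` \<Union>L" using img \<open>a' \<in> \<Union>M\<close> \<open>b' \<in> \<Union>M\<close> by simp_all
    ultimately obtain a b where ab: "e = {g a, g b}" "a \<in> \<Union>L" "b \<in> \<Union>L" by blast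
    then have "{a, b} \<in> L" using edge \<open>e \<in> M\<close> by blast
    then show "e \<in> edge_image g L" unfolding edge_image_def ab(1) by (rule rev_image_eqI) simp
  qed
qed

definition orbit_iso :: "'a set set \<Rightarrow> 'a set set \<Rightarrow> ('a \<Rightarrow> 'a) \<Rightarrow> bool" where
  "orbit_iso L M g \<longleftrightarrow> lobe_iso L M g \<and> (\<forall>x\<in>\<Union>L. g x \<in> orbit_of Aut x)"

lemma orbit_of_Aut_trans: "y \<in> orbit_of Aut x \<Longrightarrow> z \<in> orbit_of Aut y \<Longrightarrow> z \<in> orbit_of Aut x"
  unfolding orbit_of_iff using automorphisms_comp by (metis comp_apply)

lemma orbit_of_Aut_sym: "x \<in> V \<Longrightarrow> y \<in> orbit_of Aut x \<Longrightarrow> x \<in> orbit_of Aut y"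
  unfolding orbit_of_iff using automorphisms_inv automorphism_inv_cancel(1) by metis

lemma orbit_isoD:
  assumes "orbit_iso L M g"
  shows "bij_betw g (\<Union>L) (\<Union>M)" "inj_on g (\<Union>L)" "g ` \<Union>L = \<Union>M"
    "x \<in> \<Union>L \<Longrightarrow> y \<in> \<Union>L \<Longrightarrow> {x, y} \<in> L \<longleftrightarrow> {g x, g y} \<in> M"
    "x \<in> \<Union>L \<Longrightarrow> g x \<in> orbit_of Aut x"
  using assms unfolding orbit_iso_def lobe_iso_def bij_betw_def by blast+

lemma automorphism_orbit_iso: "f \<in> Aut \<Longrightarrow> L \<in> Lobes \<Longrightarrow> orbit_iso L (edge_image f L) f"
  unfolding orbit_iso_def orbit_of_iff using automorphism_lobe_iso by blast

lemma orbit_iso_comp: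
  assumes "orbit_iso L M g" "orbit_iso M N h"
  shows "orbit_iso L N (h \<circ> g)"
proof -
  have g: "g x \<in> \<Union>M" if "x \<in> \<Union>L" for x using orbit_isoD(3)[OF assms(1)] that by blast
  have "(h \<circ> g) x \<in> orbit_of Aut x" if "x \<in> \<Union>L" for x
    using orbit_of_Aut_trans[OF orbit_isoD(5)[OF assms(1) that] orbit_isoD(5)[OF assms(2) g[OF that]]]
    by simp
  then show ?thesis
    unfolding orbit_iso_def lobe_iso_def
    using bij_betw_trans[OF orbit_isoD(1)[OF assms(1)] orbit_isoD(1)[OF assms(2)]]
      orbit_isoD(4)[OF assms(1)] orbit_isoD(4)[OF assms(2) g g]
    by auto
qed

lemma orbit_iso_inv:
  assumes g: "orbit_iso L M g" and L: "L \<in> Lobes"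
  shows "orbit_iso M L (inv_into (\<Union>L) g)"
proof -
  let ?i = "inv_into (\<Union>L) g"
  have i: "bij_betw ?i (\<Union>M) (\<Union>L)" using bij_betw_inv_into[OF orbit_isoD(1)[OF g]] .
  have gi: "g (?i y) = y" "?i y \<in> \<Union>L" if "y \<in> \<Union>M" for y
    using that orbit_isoD(3)[OF g] bij_betwE[OF i] by (auto simp: f_inv_into_f)
  have "{x, y} \<in> M \<longleftrightarrow> {?i x, ?i y} \<in> L" if "x \<in> \<Union>M" "y \<in> \<Union>M" for x y
    using orbit_isoD(4)[OF g gi(2) gi(2)] gi(1) that by metis
  moreover have "?i y \<in> orbit_of Aut y" if "y \<in> \<Union>M" for y
    using orbit_isoD(5)[OF g gi(2)[OF that]] orbit_of_Aut_sym gi[OF that] lobe_vertices_subset[OF L]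
    by auto
  ultimately show ?thesis using i unfolding orbit_iso_def lobe_iso_def by blast
qed

definition lobes_at :: "'a \<Rightarrow> 'a set set set" where
  "lobes_at c = {N \<in> Lobes. c \<in> \<Union>N}"

lemma automorphism_lobes_at: "g \<in> Aut \<Longrightarrow> N \<in> lobes_at c \<Longrightarrow> edge_image g N \<in> lobes_at (g c)"
  using automorphism_lobe Union_edge_image[of g N] unfolding lobes_at_def by blast

lemma automorphism_bij_lobes_at:
  assumes g: "g \<in> Aut" and c: "c \<in> V"
  shows "bij_betw (edge_image g) (lobes_at c) (lobes_at (g c))"
proof (rule bij_betw_byWitness[where f' = "edge_image (inv_into V g)"])
  show "edge_image (inv_into V g) ` lobes_at (g c) \<subseteq> lobes_at c"
    using automorphism_lobes_at[OF automorphisms_inv[OF g], of _ "g c"]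
    by (auto simp: automorphism_inv_cancel(1)[OF g c])
qed (use automorphism_lobes_at[OF g] in \<open>auto simp: lobes_at_def automorphism_edge_image_cancel[OF g]\<close>)

text \<open>The local step of extending an orbit-preserving isomorphism \<open>h : M \<rightarrow> M'\<close>: the other lobes at
  \<open>c \<in> M\<close> can be matched with the other lobes at \<open>h c\<close> by orbit-preserving isomorphisms sending
  \<open>c\<close> to \<open>h c\<close>. An automorphism \<open>g\<close> with \<open>g c = h c\<close> almost does this; only the lobe that
  \<open>g\<close> sends to \<open>M'\<close> has to be rerouted to \<open>g M\<close>, through \<open>h\<inverse>\<close>.\<close>

definition lobe_matching ::
  "'a \<Rightarrow> 'a set set \<Rightarrow> 'a set set \<Rightarrow> ('a \<Rightarrow> 'a) \<Rightarrow> ('a set set \<Rightarrow> 'a set set) \<Rightarrow> ('a set set \<Rightarrow> 'a \<Rightarrow> 'a) \<Rightarrow> bool"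
where
  "lobe_matching c M M' h \<beta> \<gamma> \<longleftrightarrow> bij_betw \<beta> (lobes_at c - {M}) (lobes_at (h c) - {M'}) \<and>
     (\<forall>N \<in> lobes_at c - {M}. orbit_iso N (\<beta> N) (\<gamma> N) \<and> \<gamma> N c = h c)"

lemma lobe_matching_exists:
  assumes M: "M \<in> Lobes" "c \<in> \<Union>M" and M': "M' \<in> Lobes" and h: "orbit_iso M M' h"
  shows "\<exists>\<beta> \<gamma>. lobe_matching c M M' h \<beta> \<gamma>"
proof -
  obtain g where g: "g \<in> Aut" "g c = h c" using orbit_isoD(5)[OF h M(2)] unfolding orbit_of_iff by metis
  have c: "c \<in> V" using M lobe_vertices_subset by blast
  have "h c \<in> \<Union>M'" using orbit_isoD(3)[OF h] M(2) by blast
  then have in_lobes_at: "M \<in> lobes_at c" "M' \<in> lobes_at (g c)" using M M' g(2)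
    by (auto simp: lobes_at_def)
  define \<beta> where "\<beta> N = (if edge_image g N = M' then edge_image g M else edge_image g N)" for N
  define \<gamma> where "\<gamma> N = (if edge_image g N = M' then g \<circ> inv_into (\<Union>M) h \<circ> g else g)" for N
  have "bij_betw \<beta> (lobes_at c - {M}) (lobes_at (h c) - {M'})"
    using bij_betw_remove_point[OF automorphism_bij_lobes_at[OF g(1) c] in_lobes_at] g(2)
    unfolding \<beta>_def by simp
  moreover have "orbit_iso N (\<beta> N) (\<gamma> N) \<and> \<gamma> N c = h c" if N: "N \<in> lobes_at c" for N
  proof (cases "edge_image g N = M'")
    case True
    have "orbit_iso N M (inv_into (\<Union>M) h \<circ> g)"
      using orbit_iso_comp automorphism_orbit_iso[OF g(1)] orbit_iso_inv[OF h M(1)] N True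
      unfolding lobes_at_def by fastforce
    then have "orbit_iso N (edge_image g M) (g \<circ> inv_into (\<Union>M) h \<circ> g)"
      using orbit_iso_comp automorphism_orbit_iso[OF g(1) M(1)] by (metis comp_assoc)
    moreover have "inv_into (\<Union>M) h (h c) = c" using orbit_isoD(2)[OF h] M(2) by simp
    ultimately show ?thesis using True g(2) unfolding \<beta>_def \<gamma>_def by simp
  qed (use N g automorphism_orbit_iso in \<open>auto simp: \<beta>_def \<gamma>_def lobes_at_def\<close>)
  ultimately show ?thesis unfolding lobe_matching_def by blast
qed

definition matching :: "'a \<Rightarrow> 'a set set \<Rightarrow> 'a set set \<Rightarrow> ('a \<Rightarrow> 'a) \<Rightarrow>
    ('a set set \<Rightarrow> 'a set set) \<times> ('a set set \<Rightarrow> 'a \<Rightarrow> 'a)"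
where
  "matching c M M' h = (SOME p. lobe_matching c M M' h (fst p) (snd p))"

lemma matching:
  assumes "M \<in> Lobes" "c \<in> \<Union>M" "M' \<in> Lobes" "orbit_iso M M' h"
  shows "lobe_matching c M M' h (fst (matching c M M' h)) (snd (matching c M M' h))"
  using lobe_matching_exists[OF assms] unfolding matching_def by (metis (mono_tags) someI_ex prod.sel)

end

section \<open>Extending orbit-preserving isomorphisms\<close>

text \<open>The lobes are processed away from \<open>L0\<close> (tree \<open>A\<close>), each one being matched, at its attachment
  vertex, with a lobe hanging from the image of that vertex away from \<open>L\<close> (tree \<open>B\<close>).\<close>

locale lobe_extension = connected_sgraph +
  fixes L0 L :: "'a set set" and \<sigma>0 :: "'a \<Rightarrow> 'a"
  assumes L0: "L0 \<in> lobes V E" and L: "L \<in> lobes V E" and \<sigma>0: "orbit_iso L0 L \<sigma>0"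
begin

sublocale A: lobe_tree V E L0 by unfold_locales (rule L0)
sublocale B: lobe_tree V E L by unfold_locales (rule L)

function extend :: "'a set set \<Rightarrow> 'a set set \<times> ('a \<Rightarrow> 'a)" where
  "extend N = (if N \<in> Lobes \<and> N \<noteq> L0 then
     (let P = extend (A.parent N); m = matching (A.attach N) (A.parent N) (fst P) (snd P)
      in (fst m N, snd m N))
   else (L, \<sigma>0))"
  by auto
termination by (relation "measure A.rank") (auto intro: A.rank_parent_less)

declare extend.simps [simp del]

definition ext_lobe :: "'a set set \<Rightarrow> 'a set set" where
  "ext_lobe N = fst (extend N)"

definition ext_map :: "'a set set \<Rightarrow> 'a \<Rightarrow> 'a" where
  "ext_map N = snd (extend N)"

lemma extend_root: "ext_lobe L0 = L" "ext_map L0 = \<sigma>0"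
  unfolding ext_lobe_def ext_map_def by (simp_all add: extend.simps)

lemma extend_step:
  assumes "N \<in> Lobes" "N \<noteq> L0"
  defines "m \<equiv> matching (A.attach N) (A.parent N) (ext_lobe (A.parent N)) (ext_map (A.parent N))"
  shows "ext_lobe N = fst m N" "ext_map N = snd m N"
  using assms unfolding ext_lobe_def ext_map_def m_def by (simp_all add: extend.simps[of N] Let_def)

lemma extend_matching_if_parent_iso:
  assumes N: "N \<in> Lobes" "N \<noteq> L0"
    and M: "ext_lobe (A.parent N) \<in> Lobes"
      "orbit_iso (A.parent N) (ext_lobe (A.parent N)) (ext_map (A.parent N))"
  shows "ext_lobe N \<in> lobes_at (ext_map (A.parent N) (A.attach N)) - {ext_lobe (A.parent N)}"
    "orbit_iso N (ext_lobe N) (ext_map N)" "ext_map N (A.attach N) = ext_map (A.parent N) (A.attach N)"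
proof -
  have "N \<in> lobes_at (A.attach N) - {A.parent N}" using A.attach(1)[OF N] A.parent(3)[OF N] N(1)
    by (auto simp: lobes_at_def)
  moreover note matching[OF A.parent(1,2)[OF N] M] extend_step[OF N]
  ultimately show "ext_lobe N \<in> lobes_at (ext_map (A.parent N) (A.attach N)) - {ext_lobe (A.parent N)}"
    "orbit_iso N (ext_lobe N) (ext_map N)" "ext_map N (A.attach N) = ext_map (A.parent N) (A.attach N)"
    unfolding lobe_matching_def by (auto dest: bij_betwE)
qed

lemma extend_orbit_iso: "N \<in> Lobes \<Longrightarrow> ext_lobe N \<in> Lobes \<and> orbit_iso N (ext_lobe N) (ext_map N)"
proof (induction "A.rank N" arbitrary: N rule: less_induct)
  case less
  show ?case
  proof (cases "N = L0")
    case False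
    then have "ext_lobe (A.parent N) \<in> Lobes \<and>
        orbit_iso (A.parent N) (ext_lobe (A.parent N)) (ext_map (A.parent N))"
      using less A.rank_parent_less A.parent(1) by blast
    then show ?thesis using extend_matching_if_parent_iso[OF less.prems False]
      by (auto simp: lobes_at_def)
  qed (use extend_root L \<sigma>0 in auto)
qed

lemma extend_matching:
  assumes "N \<in> Lobes" "N \<noteq> L0"
  shows "ext_lobe N \<in> lobes_at (ext_map (A.parent N) (A.attach N)) - {ext_lobe (A.parent N)}"
    "ext_map N (A.attach N) = ext_map (A.parent N) (A.attach N)"
  using extend_matching_if_parent_iso[OF assms] extend_orbit_iso A.parent(1)[OF assms] by auto

lemma ext_lobe_attach:
  "N \<in> Lobes \<Longrightarrow> N \<noteq> L0 \<Longrightarrow> ext_lobe N \<noteq> L \<and> B.attach (ext_lobe N) = ext_map N (A.attach N)"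
proof (induction "A.rank N" arbitrary: N rule: less_induct)
  case less
  define M where "M = A.parent N"
  define c where "c = A.attach N"
  have M: "M \<in> Lobes" "c \<in> \<Union>M" "M \<noteq> L0 \<Longrightarrow> A.attach M \<noteq> c"
    using A.parent[OF less.prems] unfolding M_def c_def by auto
  note iso = extend_orbit_iso[OF M(1)]
  have N': "ext_lobe N \<in> Lobes" "ext_map M c \<in> \<Union>(ext_lobe N)" "ext_lobe N \<noteq> ext_lobe M"
    "ext_map N c = ext_map M c"
    using extend_matching[OF less.prems] unfolding M_def c_def lobes_at_def by auto
  have "ext_lobe M = L \<or> B.attach (ext_lobe M) \<noteq> ext_map M c"
  proof (cases "M = L0")
    case False
    then have "B.attach (ext_lobe M) = ext_map M (A.attach M)"
      using less.hyps[OF A.rank_parent_less[OF less.prems]] M(1) unfolding M_def by blast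
    moreover have "A.attach M \<in> \<Union>M" using A.attach(1)[OF M(1) False] .
    ultimately show ?thesis using orbit_isoD(2)[OF conjunct2[OF iso]] M(2,3) False
      by (auto dest: inj_onD)
  qed (simp add: extend_root)
  moreover have "ext_map M c \<in> \<Union>(ext_lobe M)" using orbit_isoD(3)[OF conjunct2[OF iso]] M(2) by blast
  ultimately show ?case
    using B.attach_eq_shared_vertex[OF N'(1) conjunct1[OF iso] N'(3) N'(2)] N'(4) unfolding c_def by auto
qed

lemma ext_lobe_above:
  assumes M: "M \<in> Lobes" "c \<in> \<Union>M" "M = L0 \<or> A.attach M \<noteq> c"
  shows "ext_lobe M = L \<or> B.attach (ext_lobe M) \<noteq> ext_map M c"
proof (cases "M = L0")
  case False
  then show ?thesis
    using ext_lobe_attach[OF M(1) False] A.attach(1)[OF M(1) False] M(2,3)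
      orbit_isoD(2)[OF conjunct2[OF extend_orbit_iso[OF M(1)]]] by (auto dest: inj_onD)
qed (simp add: extend_root)

lemma ext_lobe_parent:
  assumes N: "N \<in> Lobes" "N \<noteq> L0"
  shows "B.parent (ext_lobe N) = ext_lobe (A.parent N)"
proof -
  define M where "M = A.parent N"
  have M: "M \<in> Lobes" "A.attach N \<in> \<Union>M" "M = L0 \<or> A.attach M \<noteq> A.attach N"
    using A.parent[OF N] unfolding M_def by auto
  note iso = extend_orbit_iso[OF M(1)]
  show ?thesis
    using B.parent_eq_shared[of "ext_lobe N" "ext_lobe M" "ext_map M (A.attach N)"] extend_matching[OF N]
      ext_lobe_above[OF M] conjunct1[OF iso] orbit_isoD(3)[OF conjunct2[OF iso]] M(2)
    unfolding M_def lobes_at_def by auto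
qed

definition ext_aut :: "'a \<Rightarrow> 'a" where
  "ext_aut x = ext_map (A.home x) x"

lemma ext_aut_eq: "N \<in> Lobes \<Longrightarrow> x \<in> \<Union>N \<Longrightarrow> ext_aut x = ext_map N x"
proof (induction "A.rank N" arbitrary: N rule: less_induct)
  case less
  show ?case
  proof (cases "N \<noteq> L0 \<and> x = A.attach N")
    case True
    then have "ext_aut x = ext_map (A.parent N) x"
      using less A.rank_parent_less A.parent(1,2) by blast
    then show ?thesis using extend_matching(2)[OF less.prems(1)] True by simp
  next
    case False
    then have "A.home x = N" using A.home_eqI[OF less.prems] by blast
    then show ?thesis unfolding ext_aut_def by simp
  qed
qed

lemma home_ext_aut: "x \<in> V \<Longrightarrow> B.home (ext_aut x) = ext_lobe (A.home x)"
proof -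
  assume x: "x \<in> V"
  define N where "N = A.home x"
  have N: "N \<in> Lobes" "x \<in> \<Union>N" "N = L0 \<or> A.attach N \<noteq> x" using A.home[OF x] unfolding N_def by auto
  note iso = extend_orbit_iso[OF N(1)]
  show ?thesis
    using B.home_eqI[OF conjunct1[OF iso] _ ext_lobe_above[OF N]] orbit_isoD(3)[OF conjunct2[OF iso]]
      N(2) unfolding ext_aut_def N_def by blast
qed

lemma ext_lobe_inj: "N1 \<in> Lobes \<Longrightarrow> N2 \<in> Lobes \<Longrightarrow> ext_lobe N1 = ext_lobe N2 \<Longrightarrow> N1 = N2"
proof (induction "A.rank N1" arbitrary: N1 N2 rule: less_induct)
  case less
  note N1 = less.prems(1) and N2 = less.prems(2) and eq = less.prems(3)
  show ?case
  proof (cases "N1 = L0 \<or> N2 = L0")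
    case True
    then show ?thesis using ext_lobe_attach extend_root N1 N2 eq by metis
  next
    case False
    then have n: "N1 \<noteq> L0" "N2 \<noteq> L0" by auto
    have "ext_lobe (A.parent N1) = ext_lobe (A.parent N2)" using ext_lobe_parent N1 N2 n eq by metis
    then have M: "A.parent N1 = A.parent N2"
      using less.hyps[OF A.rank_parent_less[OF N1 n(1)] A.parent(1)[OF N1 n(1)] A.parent(1)[OF N2 n(2)]]
      by blast
    define M1 where "M1 = A.parent N1"
    have "ext_map M1 (A.attach N1) = ext_map M1 (A.attach N2)"
      using ext_lobe_attach N1 N2 n eq extend_matching(2) M unfolding M1_def by metis
    then have c: "A.attach N1 = A.attach N2"
      using orbit_isoD(2)[OF conjunct2[OF extend_orbit_iso[OF A.parent(1)[OF N1 n(1)]]]]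
        A.parent(2)[OF N1 n(1)] A.parent(2)[OF N2 n(2)] M unfolding M1_def by (auto dest: inj_onD)
    let ?m = "matching (A.attach N1) M1 (ext_lobe M1) (ext_map M1)"
    have "bij_betw (fst ?m) (lobes_at (A.attach N1) - {M1})
        (lobes_at (ext_map M1 (A.attach N1)) - {ext_lobe M1})"
      using matching[OF A.parent(1,2)[OF N1 n(1)]] extend_orbit_iso[OF A.parent(1)[OF N1 n(1)]]
      unfolding lobe_matching_def M1_def by blast
    moreover have "N1 \<in> lobes_at (A.attach N1) - {M1}" "N2 \<in> lobes_at (A.attach N1) - {M1}"
      using A.attach(1)[OF N1 n(1)] A.attach(1)[OF N2 n(2)]
        A.parent(3)[OF N1 n(1)] A.parent(3)[OF N2 n(2)]
        N1 N2 c M unfolding M1_def lobes_at_def by auto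
    moreover have "fst ?m N1 = fst ?m N2" using extend_step(1) N1 N2 n eq c M unfolding M1_def by metis
    ultimately show ?thesis by (auto dest: bij_betw_imp_inj_on inj_onD)
  qed
qed

lemma ext_lobe_surj: "N' \<in> Lobes \<Longrightarrow> \<exists>N\<in>Lobes. ext_lobe N = N'"
proof (induction "B.rank N'" arbitrary: N' rule: less_induct)
  case less
  show ?case
  proof (cases "N' = L")
    case True
    then show ?thesis using extend_root L0 by blast
  next
    case False
    note N' = less.prems False
    obtain M where M: "M \<in> Lobes" "ext_lobe M = B.parent N'"
      using less.hyps[OF B.rank_parent_less[OF N']] B.parent(1)[OF N'] by blast
    note iso = conjunct2[OF extend_orbit_iso[OF M(1)]]
    obtain c where c: "c \<in> \<Union>M" "B.attach N' = ext_map M c"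
      using orbit_isoD(3)[OF iso] B.parent(2)[OF N'] M(2) by blast
    have M_above: "M = L0 \<or> A.attach M \<noteq> c"
    proof (cases "M = L0")
      case False
      then have "B.parent N' \<noteq> L" "B.attach (B.parent N') = ext_map M (A.attach M)"
        using ext_lobe_attach[OF M(1)] M(2) by auto
      then show ?thesis using B.parent(4)[OF N'] c(2) by auto
    qed simp
    let ?m = "matching c M (ext_lobe M) (ext_map M)"
    have "bij_betw (fst ?m) (lobes_at c - {M}) (lobes_at (ext_map M c) - {ext_lobe M})"
      using matching[OF M(1) c(1)] extend_orbit_iso[OF M(1)] unfolding lobe_matching_def by blast
    moreover have "N' \<in> lobes_at (ext_map M c) - {ext_lobe M}"
      using N' B.attach(1)[OF N'] B.parent(3)[OF N'] M(2) c(2) unfolding lobes_at_def by auto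
    ultimately have "N' \<in> fst ?m ` (lobes_at c - {M})" by (simp add: bij_betw_def)
    then obtain N where N: "N \<in> Lobes" "c \<in> \<Union>N" "N \<noteq> M" "fst ?m N = N'"
      unfolding lobes_at_def by blast
    have "N \<noteq> L0" "A.attach N = c" "A.parent N = M"
      using A.attach_eq_shared_vertex[OF N(1) M(1) N(3) N(2) c(1) M_above]
        A.parent_eq_shared[OF N(1) M(1) N(3) N(2) c(1) M_above] by auto
    then show ?thesis using extend_step(1)[OF N(1)] N by auto
  qed
qed

lemma ext_aut_inj: "x1 \<in> V \<Longrightarrow> x2 \<in> V \<Longrightarrow> ext_aut x1 = ext_aut x2 \<Longrightarrow> x1 = x2"
proof -
  assume x: "x1 \<in> V" "x2 \<in> V" "ext_aut x1 = ext_aut x2"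
  then have "A.home x1 = A.home x2" using home_ext_aut ext_lobe_inj A.home by metis
  then show "x1 = x2"
    using x A.home[OF x(1)] A.home[OF x(2)] orbit_isoD(2)[OF conjunct2[OF extend_orbit_iso]]
    unfolding ext_aut_def by (metis inj_onD)
qed

lemma ext_aut_surj: "y \<in> V \<Longrightarrow> \<exists>x\<in>V. ext_aut x = y"
proof -
  assume "y \<in> V"
  then obtain N' where N': "N' \<in> Lobes" "y \<in> \<Union>N'" using vertex_in_some_lobe L by blast
  then obtain N where N: "N \<in> Lobes" "ext_lobe N = N'" using ext_lobe_surj by blast
  then obtain x where "x \<in> \<Union>N" "y = ext_map N x"
    using orbit_isoD(3)[OF conjunct2[OF extend_orbit_iso[OF N(1)]]] N'(2) by blast
  then show ?thesis using ext_aut_eq[OF N(1)] lobe_vertices_subset[OF N(1)] by blast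
qed

lemma ext_aut_adj: "u \<in> V \<Longrightarrow> v \<in> V \<Longrightarrow> E u v \<longleftrightarrow> E (ext_aut u) (ext_aut v)"
proof
  assume "E u v"
  define N where "N = lobe_of {u, v}"
  have N: "N \<in> Lobes" "{u, v} \<in> N" "u \<in> \<Union>N" "v \<in> \<Union>N"
    using \<open>E u v\<close> lobe_of_in_lobes mem_lobe_of doubleton_in_edges_iff unfolding N_def by blast+
  note iso = extend_orbit_iso[OF N(1)]
  have "{ext_map N u, ext_map N v} \<in> ext_lobe N"
    using orbit_isoD(4)[OF conjunct2[OF iso] N(3,4)] N(2) by simp
  then have "E (ext_map N u) (ext_map N v)"
    using lobe_subset_edges[OF conjunct1[OF iso]] doubleton_in_edges_iff by blast
  then show "E (ext_aut u) (ext_aut v)" using ext_aut_eq[OF N(1) N(3)] ext_aut_eq[OF N(1) N(4)] by simp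
next
  assume uv: "u \<in> V" "v \<in> V" and "E (ext_aut u) (ext_aut v)"
  then have e: "{ext_aut u, ext_aut v} \<in> edges V E" by (simp add: doubleton_in_edges_iff)
  obtain N where N: "N \<in> Lobes" "ext_lobe N = lobe_of {ext_aut u, ext_aut v}"
    using ext_lobe_surj[OF lobe_of_in_lobes[OF e]] by blast
  note iso = conjunct2[OF extend_orbit_iso[OF N(1)]]
  have e': "{ext_aut u, ext_aut v} \<in> ext_lobe N" using N(2) mem_lobe_of[OF e] by simp
  then have "ext_aut u \<in> ext_map N ` \<Union>N" "ext_aut v \<in> ext_map N ` \<Union>N"
    using orbit_isoD(3)[OF iso] by blast+
  then obtain a b where ab: "a \<in> \<Union>N" "b \<in> \<Union>N" "ext_aut u = ext_map N a" "ext_aut v = ext_map N b"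
    by blast
  have "a \<in> V" "b \<in> V" using ab(1,2) lobe_vertices_subset[OF N(1)] by blast+
  then have "a = u" "b = v"
    using ext_aut_inj[OF _ uv(1), of a] ext_aut_inj[OF _ uv(2), of b] ext_aut_eq[OF N(1)] ab by auto
  then have "{u, v} \<in> N" using orbit_isoD(4)[OF iso ab(1,2)] e' ab(3,4) by simp
  then show "E u v" using lobe_subset_edges[OF N(1)] doubleton_in_edges_iff by blast
qed

lemma ext_aut_in_V: "x \<in> V \<Longrightarrow> ext_aut x \<in> V"
  using A.home[of x] orbit_isoD(3)[OF conjunct2[OF extend_orbit_iso]] extend_orbit_iso
    lobe_vertices_subset unfolding ext_aut_def by blast

theorem ext_aut: "ext_aut \<in> Aut" "edge_image ext_aut L0 = L"
proof -
  have "inj_on ext_aut V" using ext_aut_inj unfolding inj_on_def by blast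
  moreover have "ext_aut ` V = V" using ext_aut_surj ext_aut_in_V by blast
  ultimately show "ext_aut \<in> Aut" using ext_aut_adj unfolding automorphisms_def bij_betw_def by blast
  have "edge_image ext_aut L0 = edge_image \<sigma>0 L0"
    using ext_aut_eq[OF L0] extend_root unfolding edge_image_def by (auto intro!: image_cong)
  then show "edge_image ext_aut L0 = L"
    using lobe_iso_edge_image[OF L0 L] \<sigma>0 unfolding orbit_iso_def by simp
qed

end

theorem (in connected_sgraph) orbit_iso_extends_to_automorphism:
  assumes "L0 \<in> Lobes" "L \<in> Lobes" "orbit_iso L0 L \<sigma>0"
  shows "\<exists>f\<in>Aut. edge_image f L0 = L"
proof -
  interpret lobe_extension V E L0 L \<sigma>0 by unfold_locales (use assms in auto)
  show ?thesis using ext_aut by blast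
qed

section \<open>Counting lobes through stabiliser orbits\<close>

definition stabilizer_orbits :: "'a set \<Rightarrow> ('a \<Rightarrow> 'a \<Rightarrow> bool) \<Rightarrow> 'a set set \<Rightarrow> 'a set set" where
  "stabilizer_orbits V E L0 = {orbit_of (lobe_stabilizer V E L0) w | w. w \<in> V \<and>
     orbit_of (lobe_stabilizer V E L0) w \<subseteq> \<Union>L0}"

definition lobe_count ::
  "'a set \<Rightarrow> ('a \<Rightarrow> 'a \<Rightarrow> bool) \<Rightarrow> ('a set set \<Rightarrow> 'a \<Rightarrow> 'a) \<Rightarrow> 'a set \<Rightarrow> 'a \<Rightarrow> enat" where
  "lobe_count V E \<sigma> Q v = ecount {L \<in> lobes V E. v \<in> \<sigma> L ` Q}"

definition constant_on_aut_orbits :: "'a set \<Rightarrow> ('a \<Rightarrow> 'a \<Rightarrow> bool) \<Rightarrow> ('a \<Rightarrow> 'b) \<Rightarrow> bool" where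
  "constant_on_aut_orbits V E f \<longleftrightarrow>
     (\<forall>P \<in> {orbit_of (automorphisms V E) u | u. u \<in> V}. \<forall>u\<in>P. \<forall>w\<in>P. f u = f w)"

lemma ecount_bij_betw: "bij_betw f A B \<Longrightarrow> ecount A = ecount B"
  unfolding ecount_def using bij_betw_finite bij_betw_same_card by metis

lemma ecount_pos_iff: "0 < ecount A \<longleftrightarrow> A \<noteq> {}"
  unfolding ecount_def by (auto simp: zero_enat_def)

context sgraph
begin

lemma lobe_stabilizer_subset: "lobe_stabilizer V E L0 \<subseteq> Aut"
  unfolding lobe_stabilizer_def by blast

lemma id_in_lobe_stabilizer: "id \<in> lobe_stabilizer V E L0"
  unfolding lobe_stabilizer_def edge_image_def using id_automorphism by (simp add: image_id)

lemma stabilizer_orbit_subset: "x \<in> \<Union>L0 \<Longrightarrow> orbit_of (lobe_stabilizer V E L0) x \<subseteq> \<Union>L0"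
proof
  fix y assume "x \<in> \<Union>L0" "y \<in> orbit_of (lobe_stabilizer V E L0) x"
  then obtain s where "edge_image s L0 = L0" "y \<in> s ` \<Union>L0"
    unfolding orbit_of_def lobe_stabilizer_def by blast
  then show "y \<in> \<Union>L0" using Union_edge_image[of s L0] by simp
qed

text \<open>Automorphisms mapping \<open>L0\<close> to the same lobe differ by an element of the stabiliser of \<open>L0\<close>,
  so they map each orbit of the stabiliser to the same set.\<close>

lemma image_stabilizer_orbit_eq:
  assumes L0: "L0 \<in> Lobes" and w: "w \<in> V"
    and f: "f \<in> Aut" "f' \<in> Aut" "edge_image f L0 = edge_image f' L0"
  shows "f ` orbit_of (lobe_stabilizer V E L0) w = f' ` orbit_of (lobe_stabilizer V E L0) w"
proof -
  have sub: "g ` orbit_of (lobe_stabilizer V E L0) w \<subseteq> g' ` orbit_of (lobe_stabilizer V E L0) w"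
    if g: "g \<in> Aut" "g' \<in> Aut" "edge_image g L0 = edge_image g' L0" for g g'
  proof
    fix y assume "y \<in> g ` orbit_of (lobe_stabilizer V E L0) w"
    then obtain s where s: "s \<in> Aut" "edge_image s L0 = L0" "y = g (s w)"
      unfolding orbit_of_def lobe_stabilizer_def by blast
    let ?t = "inv_into V g' \<circ> g \<circ> s"
    have "?t \<in> Aut" using s(1) g(1) automorphisms_inv[OF g(2)] automorphisms_comp by blast
    moreover have "edge_image ?t L0 = L0"
      using s(2) g(3) automorphism_edge_image_cancel(1)[OF g(2) L0] by (simp add: edge_image_comp)
    moreover have "g' (?t w) = y"
      using s(1,3) g(1) w automorphism_inv_cancel(2)[OF g(2)] automorphismsD(4) by simp
    ultimately show "y \<in> g' ` orbit_of (lobe_stabilizer V E L0) w"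
      unfolding orbit_of_def lobe_stabilizer_def by blast
  qed
  show ?thesis using sub[OF f] sub[OF f(2,1) f(3)[symmetric]] by blast
qed

lemma automorphism_bij_lobes: "g \<in> Aut \<Longrightarrow> bij_betw (edge_image g) Lobes Lobes"
  by (rule bij_betw_byWitness[where f' = "edge_image (inv_into V g)"])
    (auto simp: automorphism_edge_image_cancel automorphism_lobe automorphisms_inv)

text \<open>With \<open>\<sigma> L\<close> an automorphism mapping \<open>L0\<close> to \<open>L\<close>, an automorphism \<open>g\<close> permutes the lobes
  counted by \<open>lobe_count \<sigma> Q\<close> at \<open>v\<close> into those counted at \<open>g v\<close>.\<close>

lemma lobe_count_automorphism:
  assumes L0: "L0 \<in> Lobes" and \<sigma>: "\<And>L. L \<in> Lobes \<Longrightarrow> \<sigma> L \<in> Aut \<and> edge_image (\<sigma> L) L0 = L"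
    and Q: "Q \<in> stabilizer_orbits V E L0" and g: "g \<in> Aut" and v: "v \<in> V"
  shows "lobe_count V E \<sigma> Q (g v) = lobe_count V E \<sigma> Q v"
proof -
  obtain w where w: "w \<in> V" "Q = orbit_of (lobe_stabilizer V E L0) w" "Q \<subseteq> \<Union>L0"
    using Q unfolding stabilizer_orbits_def by blast
  have iff: "v \<in> \<sigma> M ` Q \<longleftrightarrow> g v \<in> \<sigma> (edge_image g M) ` Q" if M: "M \<in> Lobes" for M
  proof -
    have "g ` \<sigma> M ` Q = \<sigma> (edge_image g M) ` Q"
      using image_stabilizer_orbit_eq[OF L0 w(1) automorphisms_comp[OF conjunct1[OF \<sigma>[OF M]] g]
          conjunct1[OF \<sigma>[OF automorphism_lobe[OF g M]]]] \<sigma>[OF M] \<sigma>[OF automorphism_lobe[OF g M]]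
      unfolding w(2) by (simp add: edge_image_comp image_comp)
    moreover have "\<sigma> M ` Q \<subseteq> V"
      using w(3) lobe_vertices_subset[OF L0] automorphismsD(4)[OF conjunct1[OF \<sigma>[OF M]]] by blast
    ultimately show ?thesis using automorphismsD(2)[OF g] v by (metis inj_on_image_mem_iff)
  qed
  have eq: "{L \<in> Lobes. g v \<in> \<sigma> L ` Q} = edge_image g ` {L \<in> Lobes. v \<in> \<sigma> L ` Q}"
  proof
    show "edge_image g ` {L \<in> Lobes. v \<in> \<sigma> L ` Q} \<subseteq> {L \<in> Lobes. g v \<in> \<sigma> L ` Q}"
      using iff automorphism_lobe[OF g] by blast
    show "{L \<in> Lobes. g v \<in> \<sigma> L ` Q} \<subseteq> edge_image g ` {L \<in> Lobes. v \<in> \<sigma> L ` Q}"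
    proof
      fix L assume L: "L \<in> {L \<in> Lobes. g v \<in> \<sigma> L ` Q}"
      then have "L \<in> edge_image g ` Lobes" using automorphism_bij_lobes[OF g] by (simp add: bij_betw_def)
      then obtain M where "M \<in> Lobes" "L = edge_image g M" by blast
      then show "L \<in> edge_image g ` {L \<in> Lobes. v \<in> \<sigma> L ` Q}" using iff L by blast
    qed
  qed
  have "bij_betw (edge_image g) {L \<in> Lobes. v \<in> \<sigma> L ` Q} (edge_image g ` {L \<in> Lobes. v \<in> \<sigma> L ` Q})"
    by (rule bij_betw_subset[OF automorphism_bij_lobes[OF g]]) auto
  then show ?thesis unfolding lobe_count_def eq by (rule ecount_bij_betw[symmetric])
qed

lemma lobe_count_pos_iff:
  assumes L0: "L0 \<in> Lobes" and \<sigma>: "\<And>L. L \<in> Lobes \<Longrightarrow> \<sigma> L \<in> Aut \<and> edge_image (\<sigma> L) L0 = L"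
    and Q: "Q \<in> stabilizer_orbits V E L0"
  shows "0 < lobe_count V E \<sigma> Q v \<longleftrightarrow> v \<in> \<Union>{orbit_of Aut q | q. q \<in> Q}"
proof
  assume "0 < lobe_count V E \<sigma> Q v"
  then obtain M q where "M \<in> Lobes" "q \<in> Q" "v = \<sigma> M q"
    unfolding lobe_count_def ecount_pos_iff by blast
  then have "q \<in> Q" "v \<in> orbit_of Aut q" using \<sigma> unfolding orbit_of_iff by auto
  then show "v \<in> \<Union>{orbit_of Aut q | q. q \<in> Q}" by blast
next
  assume "v \<in> \<Union>{orbit_of Aut q | q. q \<in> Q}"
  then obtain q where "q \<in> Q" "v \<in> orbit_of Aut q" by blast
  then obtain g where q: "q \<in> Q" "g \<in> Aut" "v = g q" unfolding orbit_of_iff by blast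
  obtain w where w: "w \<in> V" "Q = orbit_of (lobe_stabilizer V E L0) w"
    using Q unfolding stabilizer_orbits_def by blast
  have M: "edge_image g L0 \<in> Lobes" using automorphism_lobe[OF q(2) L0] .
  then have "g ` Q = \<sigma> (edge_image g L0) ` Q"
    using image_stabilizer_orbit_eq[OF L0 w(1) q(2) conjunct1[OF \<sigma>[OF M]]] \<sigma>[OF M] w(2) by simp
  then have "v \<in> \<sigma> (edge_image g L0) ` Q" using q by blast
  then show "0 < lobe_count V E \<sigma> Q v" unfolding lobe_count_def ecount_pos_iff using M by blast
qed

lemma lobe_transitive_if_automorphisms_from:
  assumes L0: "L0 \<in> Lobes" and f: "\<And>L. L \<in> Lobes \<Longrightarrow> \<exists>f\<in>Aut. edge_image f L0 = L"
  shows "lobe_transitive V E"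
  unfolding lobe_transitive_def
proof (intro ballI)
  fix L1 L2 assume "L1 \<in> Lobes" "L2 \<in> Lobes"
  then obtain f1 f2 where f: "f1 \<in> Aut" "edge_image f1 L0 = L1" "f2 \<in> Aut" "edge_image f2 L0 = L2"
    using f by blast
  then have "edge_image (f2 \<circ> inv_into V f1) L1 = L2"
    using automorphism_edge_image_cancel(1)[OF f(1) L0] by (simp add: edge_image_comp)
  then show "\<exists>f\<in>Aut. edge_image f L1 = L2" using f automorphisms_comp automorphisms_inv by blast
qed

lemma orbit_iso_if_lobe_count_support:
  assumes L0: "L0 \<in> Lobes" and L: "L \<in> Lobes" and iso: "lobe_iso L0 L (\<sigma> L)"
    and support: "\<forall>Q \<in> stabilizer_orbits V E L0. \<forall>v \<in> V.
      0 < lobe_count V E \<sigma> Q v \<longrightarrow> v \<in> \<Union>{orbit_of Aut q | q. q \<in> Q}"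
  shows "orbit_iso L0 L (\<sigma> L)"
proof -
  have "\<sigma> L x \<in> orbit_of Aut x" if x: "x \<in> \<Union>L0" for x
  proof -
    define Q where "Q = orbit_of (lobe_stabilizer V E L0) x"
    have "x \<in> V" using x lobe_vertices_subset[OF L0] by blast
    then have Q: "Q \<in> stabilizer_orbits V E L0"
      using stabilizer_orbit_subset[OF x] unfolding stabilizer_orbits_def Q_def by blast
    have "id x \<in> Q" using id_in_lobe_stabilizer unfolding Q_def orbit_of_iff by blast
    then have "L \<in> {L \<in> Lobes. \<sigma> L x \<in> \<sigma> L ` Q}" using L by simp
    then have "0 < lobe_count V E \<sigma> Q (\<sigma> L x)" unfolding lobe_count_def ecount_pos_iff by blast
    moreover have "\<sigma> L x \<in> V" using iso x lobe_vertices_subset[OF L] unfolding lobe_iso_def bij_betw_def by blast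
    ultimately obtain q where "q \<in> Q" "\<sigma> L x \<in> orbit_of Aut q" using support Q by blast
    moreover have "q \<in> orbit_of Aut x"
      using \<open>q \<in> Q\<close> lobe_stabilizer_subset unfolding Q_def orbit_of_iff by blast
    ultimately show ?thesis using orbit_of_Aut_trans by blast
  qed
  then show ?thesis using iso unfolding orbit_iso_def by blast
qed

lemma lobe_count_constant_on_aut_orbits:
  assumes "L0 \<in> Lobes" "\<And>L. L \<in> Lobes \<Longrightarrow> \<sigma> L \<in> Aut \<and> edge_image (\<sigma> L) L0 = L"
    and "Q \<in> stabilizer_orbits V E L0"
  shows "constant_on_aut_orbits V E (lobe_count V E \<sigma> Q)"
  unfolding constant_on_aut_orbits_def
proof (intro ballI)
  fix P u w assume "P \<in> {orbit_of Aut u | u. u \<in> V}" "u \<in> P" "w \<in> P"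
  then obtain x where "x \<in> V" "u \<in> orbit_of Aut x" "w \<in> orbit_of Aut x" by blast
  then obtain g1 g2 where "x \<in> V" "g1 \<in> Aut" "u = g1 x" "g2 \<in> Aut" "w = g2 x"
    unfolding orbit_of_iff by blast
  then show "lobe_count V E \<sigma> Q u = lobe_count V E \<sigma> Q w"
    using lobe_count_automorphism[OF assms] by simp
qed

theorem lobe_count_conditions_if_lobe_transitive:
  assumes L0: "L0 \<in> Lobes" and "lobe_transitive V E"
  shows "\<exists>\<sigma>. (\<forall>L \<in> Lobes. lobe_iso L0 L (\<sigma> L)) \<and>
    (\<forall>Q \<in> stabilizer_orbits V E L0. constant_on_aut_orbits V E (lobe_count V E \<sigma> Q) \<and>
       (\<forall>v \<in> V. 0 < lobe_count V E \<sigma> Q v \<longleftrightarrow> v \<in> \<Union>{orbit_of Aut q | q. q \<in> Q}))"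
proof -
  define \<sigma> where "\<sigma> L = (SOME f. f \<in> Aut \<and> edge_image f L0 = L)" for L
  have \<sigma>: "\<sigma> L \<in> Aut \<and> edge_image (\<sigma> L) L0 = L" if "L \<in> Lobes" for L
  proof -
    have "\<exists>f. f \<in> Aut \<and> edge_image f L0 = L" using assms that unfolding lobe_transitive_def by blast
    then show ?thesis unfolding \<sigma>_def by (rule someI_ex)
  qed
  have "lobe_iso L0 L (\<sigma> L)" if "L \<in> Lobes" for L
    using automorphism_lobe_iso[OF conjunct1[OF \<sigma>[OF that]] L0] \<sigma>[OF that] by simp
  then show ?thesis
    using lobe_count_constant_on_aut_orbits[OF L0 \<sigma>] lobe_count_pos_iff[OF L0 \<sigma>] by blast
qed

end

context connected_sgraph
begin

theorem lobe_transitive_iff_lobe_count_conditions: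
  assumes L0: "L0 \<in> Lobes"
  shows "lobe_transitive V E \<longleftrightarrow> (\<exists>\<sigma>. (\<forall>L \<in> Lobes. lobe_iso L0 L (\<sigma> L)) \<and>
    (\<forall>Q \<in> stabilizer_orbits V E L0. constant_on_aut_orbits V E (lobe_count V E \<sigma> Q) \<and>
       (\<forall>v \<in> V. 0 < lobe_count V E \<sigma> Q v \<longleftrightarrow> v \<in> \<Union>{orbit_of Aut q | q. q \<in> Q})))"
    (is "_ \<longleftrightarrow> (\<exists>\<sigma>. ?iso \<sigma> \<and> ?counts \<sigma>)")
proof
  assume "lobe_transitive V E"
  then show "\<exists>\<sigma>. ?iso \<sigma> \<and> ?counts \<sigma>" by (rule lobe_count_conditions_if_lobe_transitive[OF L0])
next
  assume "\<exists>\<sigma>. ?iso \<sigma> \<and> ?counts \<sigma>"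
  then obtain \<sigma> where iso: "?iso \<sigma>" and counts: "?counts \<sigma>" by blast
  have "orbit_iso L0 L (\<sigma> L)" if "L \<in> Lobes" for L
    using orbit_iso_if_lobe_count_support[OF L0 that] iso counts that by simp
  then show "lobe_transitive V E"
    using lobe_transitive_if_automorphisms_from[OF L0] orbit_iso_extends_to_automorphism[OF L0] by blast
qed

end

theorem theorem3p2:
  fixes V :: "'a set" and E :: "'a \<Rightarrow> 'a \<Rightarrow> bool" and L0 :: "'a set set"
  assumes "simple_graph V E"
    and "connectivity_one V E"
    and "L0 \<in> lobes V E"
  shows "lobe_transitive V E \<longleftrightarrow>
    (\<exists>\<sigma> :: 'a set set \<Rightarrow> 'a \<Rightarrow> 'a.
       (\<forall>L \<in> lobes V E. lobe_iso L0 L (\<sigma> L)) \<and>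
       (\<forall>Q \<in> {orbit_of (lobe_stabilizer V E L0) w | w. w \<in> V \<and>
                  orbit_of (lobe_stabilizer V E L0) w \<subseteq> \<Union>L0}.
          let \<tau> = (\<lambda>v. ecount {L \<in> lobes V E. v \<in> \<sigma> L ` Q});
              PQ = \<Union>{orbit_of (automorphisms V E) q | q. q \<in> Q}
          in (\<forall>P \<in> {orbit_of (automorphisms V E) u | u. u \<in> V}. \<forall>u\<in>P. \<forall>w\<in>P. \<tau> u = \<tau> w) \<and>
             (\<forall>v \<in> V. \<tau> v > 0 \<longleftrightarrow> v \<in> PQ)))"
proof -
  interpret connected_sgraph V E
    using assms(1,2) by unfold_locales (auto simp: connectivity_one_def)
  show ?thesis
    using lobe_transitive_iff_lobe_count_conditions[OF assms(3)]
    unfolding Let_def stabilizer_orbits_def constant_on_aut_orbits_def lobe_count_def[abs_def] .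
qed

end
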